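(* For $m \geq 3$, a fan-crossing free $m$-star has at most $3m-8$ arrows, and this bound is attained only for $m=3$ (for $m \geq 4$ there are at most $3m-9$ arrows).
   Context: An $m$-star is a regular $m$-gon $P$ together with a finite set of arrows. Label the vertices of $P$ counter-clockwise $v_1,\dots,v_m$ and let $e_i = v_iv_{i+1}$ (indices modulo $m$) be its boundary edges. An arrow is a ray segment starting at a vertex $v_i$ of $P$, pointing into the interior of $P$, and ending where it exits $P$ through (the relative interior of) a boundary edge $e_j$ not incident to $v_i$; several arrows may start at the same vertex. Two elements among the boundary edges and arrows intersect if they share a point other than a common endpoint vertex; in particular an arrow intersects the edge through which it exits. An element is incident to a vertex $v$ if $v$ is one of its endpoints (an arrow is incident only to its starting vertex). The $m$-star is ($2$-)fan-crossing free if no edge or arrow intersects two elements (arrows or edges) that are incident to the same vertex. *)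

theory Defs
  imports "HOL-Analysis.Analysis"
begin

definition vtx :: "nat \<Rightarrow> complex \<Rightarrow> real \<Rightarrow> real \<Rightarrow> nat \<Rightarrow> complex" where
  "vtx m c r t k = c + of_real r * cis (t + 2 * pi * real (k mod m) / real m)"

text \<open>An arrow is represented by (i, p): it starts at vertex i and ends at the exit point p,
  which lies in the relative interior of a boundary edge e_j = v_j v_(j+1) not incident to v_i.
  (For a convex polygon the segment from v_i to such p automatically runs through the interior.)\<close>
definition is_arrow :: "nat \<Rightarrow> complex \<Rightarrow> real \<Rightarrow> real \<Rightarrow> nat \<times> complex \<Rightarrow> bool" where
  "is_arrow m c r t a \<longleftrightarrow> fst a < m \<and>
     (\<exists>j<m. j \<noteq> fst a \<and> Suc j mod m \<noteq> fst a \<and>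
        snd a \<in> open_segment (vtx m c r t j) (vtx m c r t (Suc j mod m)))"

text \<open>Elements: Inl j is the boundary edge e_j (j < m), Inr a is the arrow a.\<close>
type_synonym elem = "nat + (nat \<times> complex)"

definition elem_pts :: "nat \<Rightarrow> complex \<Rightarrow> real \<Rightarrow> real \<Rightarrow> elem \<Rightarrow> complex set" where
  "elem_pts m c r t x = (case x of
      Inl j \<Rightarrow> closed_segment (vtx m c r t j) (vtx m c r t (Suc j mod m))
    | Inr a \<Rightarrow> closed_segment (vtx m c r t (fst a)) (snd a))"

definition elem_inc :: "nat \<Rightarrow> elem \<Rightarrow> nat set" where
  "elem_inc m x = (case x of Inl j \<Rightarrow> {j, Suc j mod m} | Inr a \<Rightarrow> {fst a})"

definition intersects :: "nat \<Rightarrow> complex \<Rightarrow> real \<Rightarrow> real \<Rightarrow> elem \<Rightarrow> elem \<Rightarrow> bool" where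
  "intersects m c r t x y \<longleftrightarrow>
     (\<exists>z \<in> elem_pts m c r t x \<inter> elem_pts m c r t y.
        \<not> (\<exists>k \<in> elem_inc m x \<inter> elem_inc m y. z = vtx m c r t k))"

definition elements :: "nat \<Rightarrow> (nat \<times> complex) set \<Rightarrow> elem set" where
  "elements m A = Inl ` {..<m} \<union> Inr ` A"

definition fan_crossing_free :: "nat \<Rightarrow> complex \<Rightarrow> real \<Rightarrow> real \<Rightarrow> (nat \<times> complex) set \<Rightarrow> bool" where
  "fan_crossing_free m c r t A \<longleftrightarrow>
     \<not> (\<exists>x \<in> elements m A. \<exists>y \<in> elements m A. \<exists>z \<in> elements m A.
          y \<noteq> z \<and> x \<noteq> y \<and> x \<noteq> z \<and> elem_inc m y \<inter> elem_inc m z \<noteq> {} \<and>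
          intersects m c r t x y \<and> intersects m c r t x z)"

end

theory Submission
  imports Defs
begin

(* Parametrise the boundary of the polygon by [0, m), with vertex v_(k+1) at parameter k.  An
   arrow becomes a chord from an integer k to a non-integer exit parameter p, and since the
   polygon is convex, two such chords intersect as segments exactly when their endpoints
   interleave along the boundary.  Fan-crossing-freeness thus becomes a purely combinatorial
   condition on chords of a circle, under which there are at most 2m - 5 chords; this is
   1 = 3m - 8 for m = 3 and at most 3m - 9 for m >= 4.
   The combinatorial bound is proved by induction on m.  Pick an arrow (v, p) with the fewest
   vertices on its shorter side, and rotate and reflect the circle so that v comes first and the
   shorter side is the arc from v to p.  Let u be the vertex after v.  No arrow exits between v
   and u, and deleting u (which merges the two edges at u) invalidates at most two arrows: the
   arrows from u, the arrows from v exiting just behind u (at most one of these, and only one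
   of the two kinds can occur), and at most one arrow from v crossed by an arrow exiting just
   behind u. *)

section \<open>Chords of a circle\<close>

text \<open>The circle is cut open at some point, so its points are reals and a set of vertices is a
  finite set of reals.  Two points x, y cut the circle into two arcs, and strictly_between x y s
  says that s lies on one of them; all notions below are invariant under exchanging the arcs.\<close>

definition strictly_between :: "real \<Rightarrow> real \<Rightarrow> real \<Rightarrow> bool" where
  "strictly_between x y s \<longleftrightarrow> min x y < s \<and> s < max x y"

definition on_incident_edge :: "real set \<Rightarrow> real \<Rightarrow> real \<Rightarrow> bool" where
  "on_incident_edge S w q \<longleftrightarrow>
     (\<forall>s\<in>S. s \<noteq> w \<longrightarrow> \<not> strictly_between w q s) \<or> (\<forall>s\<in>S. s \<noteq> w \<longrightarrow> strictly_between w q s)"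

definition on_same_edge :: "real set \<Rightarrow> real \<Rightarrow> real \<Rightarrow> bool" where
  "on_same_edge S p q \<longleftrightarrow> (\<forall>s\<in>S. \<not> strictly_between p q s) \<or> (\<forall>s\<in>S. strictly_between p q s)"

definition chords_cross :: "real \<times> real \<Rightarrow> real \<times> real \<Rightarrow> bool" where
  "chords_cross a b \<longleftrightarrow> fst a \<noteq> fst b \<and>
     (snd a = snd b \<or> strictly_between (fst a) (snd a) (fst b) \<noteq> strictly_between (fst a) (snd a) (snd b))"

text \<open>The four conditions say: an arrow does not exit through an edge at its start; two arrows
  from one vertex exit through different edges; an arrow crossing the arrow y does not exit
  through an edge at the start of y; no arrow crosses two arrows from a common vertex.\<close>

definition fcf_config :: "real set \<Rightarrow> (real \<times> real) set \<Rightarrow> bool" where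
  "fcf_config S A \<longleftrightarrow> finite S \<and> finite A \<and>
     (\<forall>a\<in>A. fst a \<in> S \<and> snd a \<notin> S \<and> \<not> on_incident_edge S (fst a) (snd a)) \<and>
     (\<forall>a\<in>A. \<forall>b\<in>A. a \<noteq> b \<and> fst a = fst b \<longrightarrow> \<not> on_same_edge S (snd a) (snd b)) \<and>
     (\<forall>x\<in>A. \<forall>y\<in>A. chords_cross x y \<longrightarrow> \<not> on_incident_edge S (fst y) (snd x)) \<and>
     (\<forall>x\<in>A. \<forall>y\<in>A. \<forall>z\<in>A. chords_cross x y \<and> chords_cross x z \<and> y \<noteq> z \<and> fst y = fst z \<longrightarrow> False)"

definition inside_count :: "real set \<Rightarrow> real \<times> real \<Rightarrow> nat" where
  "inside_count S a = card {s\<in>S. strictly_between (fst a) (snd a) s}"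

definition outside_count :: "real set \<Rightarrow> real \<times> real \<Rightarrow> nat" where
  "outside_count S a = card {s\<in>S. s \<noteq> fst a \<and> \<not> strictly_between (fst a) (snd a) s}"

definition short_side :: "real set \<Rightarrow> real \<times> real \<Rightarrow> nat" where
  "short_side S a = min (inside_count S a) (outside_count S a)"

lemma fcf_configD:
  assumes "fcf_config S A"
  shows "finite S" "finite A"
    and "a \<in> A \<Longrightarrow> fst a \<in> S" "a \<in> A \<Longrightarrow> snd a \<notin> S"
    and "a \<in> A \<Longrightarrow> \<not> on_incident_edge S (fst a) (snd a)"
    and "\<lbrakk>a \<in> A; b \<in> A; a \<noteq> b; fst a = fst b\<rbrakk> \<Longrightarrow> \<not> on_same_edge S (snd a) (snd b)"
    and "\<lbrakk>x \<in> A; y \<in> A; chords_cross x y\<rbrakk> \<Longrightarrow> \<not> on_incident_edge S (fst y) (snd x)"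
    and "\<lbrakk>x \<in> A; y \<in> A; z \<in> A; chords_cross x y; chords_cross x z; y \<noteq> z; fst y = fst z\<rbrakk> \<Longrightarrow> False"
  using assms unfolding fcf_config_def by blast+

lemma strictly_between_endpoints [simp]:
  "\<not> strictly_between x y x" "\<not> strictly_between x y y" "\<not> strictly_between x x s"
  by (auto simp: strictly_between_def)

lemma strictly_between_less:
  "x < q \<Longrightarrow> strictly_between x q s \<longleftrightarrow> x < s \<and> s < q"
  "q < x \<Longrightarrow> strictly_between x q s \<longleftrightarrow> q < s \<and> s < x"
  by (auto simp: strictly_between_def)

lemma chords_cross_sym:
  assumes "chords_cross a b" "fst a \<noteq> snd b" "fst b \<noteq> snd a"
  shows "chords_cross b a"
  using assms unfolding chords_cross_def strictly_between_def min_def max_def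
  by (cases a; cases b) (auto split: if_splits)

lemma fcf_config_chords_cross_sym:
  assumes "fcf_config S A" "x \<in> A" "y \<in> A" "chords_cross x y"
  shows "chords_cross y x"
proof (rule chords_cross_sym[OF assms(4)])
  show "fst x \<noteq> snd y" "fst y \<noteq> snd x"
    using fcf_configD(3,4)[OF assms(1)] assms(2,3) by metis+
qed

section \<open>Symmetries of the circle\<close>

definition keeps_sides :: "(real \<Rightarrow> real) \<Rightarrow> real set \<Rightarrow> real \<Rightarrow> real \<Rightarrow> bool" where
  "keeps_sides f K x y \<longleftrightarrow>
     (\<forall>s\<in>K. s \<noteq> x \<and> s \<noteq> y \<longrightarrow> strictly_between (f x) (f y) (f s) = strictly_between x y s)"

definition swaps_sides :: "(real \<Rightarrow> real) \<Rightarrow> real set \<Rightarrow> real \<Rightarrow> real \<Rightarrow> bool" where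
  "swaps_sides f K x y \<longleftrightarrow>
     (\<forall>s\<in>K. s \<noteq> x \<and> s \<noteq> y \<longrightarrow> strictly_between (f x) (f y) (f s) = (\<not> strictly_between x y s))"

definition arc_symmetry :: "(real \<Rightarrow> real) \<Rightarrow> real set \<Rightarrow> bool" where
  "arc_symmetry f K \<longleftrightarrow> inj_on f K \<and>
     (\<forall>x\<in>K. \<forall>y\<in>K. x \<noteq> y \<longrightarrow> keeps_sides f K x y \<or> swaps_sides f K x y)"

lemma arc_symmetryD:
  assumes "arc_symmetry f K" "x \<in> K" "y \<in> K" "x \<noteq> y"
  shows "keeps_sides f K x y \<or> swaps_sides f K x y"
  using assms unfolding arc_symmetry_def by blast

lemma arc_symmetry_comp:
  assumes f: "arc_symmetry f K" and g: "arc_symmetry g (f ` K)"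
  shows "arc_symmetry (g \<circ> f) K"
  unfolding arc_symmetry_def
proof (intro conjI ballI impI)
  have "inj_on f K" "inj_on g (f ` K)" using f g by (auto simp: arc_symmetry_def)
  then show "inj_on (g \<circ> f) K" by (rule comp_inj_on)
  fix x y assume xy: "x \<in> K" "y \<in> K" "x \<noteq> y"
  then have fxy: "f x \<in> f ` K" "f y \<in> f ` K" "f x \<noteq> f y"
    using \<open>inj_on f K\<close> by (auto dest: inj_onD)
  have ne: "s \<in> K \<Longrightarrow> s \<noteq> x \<Longrightarrow> s \<noteq> y \<Longrightarrow> f s \<noteq> f x \<and> f s \<noteq> f y" for s
    using \<open>inj_on f K\<close> xy by (auto dest: inj_onD)
  from arc_symmetryD[OF f xy] arc_symmetryD[OF g fxy]
  show "keeps_sides (g \<circ> f) K x y \<or> swaps_sides (g \<circ> f) K x y"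
    unfolding keeps_sides_def swaps_sides_def using ne by simp metis
qed

text \<open>For T larger than the width of the point set, this rotates the cut circle so that c comes
  first.\<close>

definition cyclic_shift :: "real \<Rightarrow> real \<Rightarrow> real \<Rightarrow> real" where
  "cyclic_shift c T x = (if x < c then x + T else x)"

lemma arc_symmetry_cyclic_shift:
  assumes T: "\<forall>x\<in>K. \<forall>y\<in>K. y - x < T"
  shows "arc_symmetry (cyclic_shift c T) K"
  unfolding arc_symmetry_def
proof (intro conjI ballI impI)
  show "inj_on (cyclic_shift c T) K"
  proof (rule inj_onI)
    fix x y assume "x \<in> K" "y \<in> K" "cyclic_shift c T x = cyclic_shift c T y"
    moreover have "y - x < T" "x - y < T" using T \<open>x \<in> K\<close> \<open>y \<in> K\<close> by auto
    ultimately show "x = y" by (auto simp: cyclic_shift_def split: if_splits)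
  qed
  fix x y assume xy: "x \<in> K" "y \<in> K" "x \<noteq> y"
  have "strictly_between (cyclic_shift c T x) (cyclic_shift c T y) (cyclic_shift c T s)
          = (strictly_between x y s = ((x < c) = (y < c)))"
    if "s \<in> K" "s \<noteq> x" "s \<noteq> y" for s
  proof -
    have "y - x < T" "x - y < T" "s - x < T" "x - s < T" "s - y < T" "y - s < T"
      using T xy \<open>s \<in> K\<close> by auto
    then show ?thesis
      using that by (auto simp: cyclic_shift_def strictly_between_def min_def max_def split: if_splits)
  qed
  then show "keeps_sides (cyclic_shift c T) K x y \<or> swaps_sides (cyclic_shift c T) K x y"
    unfolding keeps_sides_def swaps_sides_def by (cases "(x < c) = (y < c)") auto
qed

context
  fixes f :: "real \<Rightarrow> real" and S :: "real set" and A :: "(real \<times> real) set"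
  assumes config: "fcf_config S A" and sym: "arc_symmetry f (S \<union> snd ` A)"
begin

lemma inj_on_points: "inj_on f (S \<union> snd ` A)"
  using sym by (simp add: arc_symmetry_def)

lemma on_incident_edge_image:
  assumes w: "w \<in> S" and q: "q \<in> snd ` A"
  shows "on_incident_edge (f ` S) (f w) (f q) = on_incident_edge S w q"
proof -
  have "q \<notin> S" using q fcf_configD(4)[OF config] by auto
  then have "w \<noteq> q" using w by auto
  have ne: "s \<in> S \<Longrightarrow> (f s \<noteq> f w) = (s \<noteq> w)" for s
    using inj_on_points w by (auto dest: inj_onD)
  have "keeps_sides f (S \<union> snd ` A) w q \<or> swaps_sides f (S \<union> snd ` A) w q"
    using arc_symmetryD[OF sym _ _ \<open>w \<noteq> q\<close>] w q by blast
  then show ?thesis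
  proof
    assume "keeps_sides f (S \<union> snd ` A) w q"
    then have "s \<in> S \<Longrightarrow> s \<noteq> w \<Longrightarrow> strictly_between (f w) (f q) (f s) = strictly_between w q s" for s
      using \<open>q \<notin> S\<close> unfolding keeps_sides_def by auto
    then show ?thesis unfolding on_incident_edge_def using ne by auto
  next
    assume "swaps_sides f (S \<union> snd ` A) w q"
    then have "s \<in> S \<Longrightarrow> s \<noteq> w \<Longrightarrow> strictly_between (f w) (f q) (f s) = (\<not> strictly_between w q s)" for s
      using \<open>q \<notin> S\<close> unfolding swaps_sides_def by auto
    then show ?thesis unfolding on_incident_edge_def using ne by auto
  qed
qed

lemma on_same_edge_image:
  assumes p: "p \<in> snd ` A" and q: "q \<in> snd ` A"
  shows "on_same_edge (f ` S) (f p) (f q) = on_same_edge S p q"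
proof (cases "p = q")
  case False
  have "p \<notin> S" "q \<notin> S" using p q fcf_configD(4)[OF config] by auto
  have "keeps_sides f (S \<union> snd ` A) p q \<or> swaps_sides f (S \<union> snd ` A) p q"
    using arc_symmetryD[OF sym _ _ False] p q by blast
  then show ?thesis
  proof
    assume "keeps_sides f (S \<union> snd ` A) p q"
    then have "s \<in> S \<Longrightarrow> strictly_between (f p) (f q) (f s) = strictly_between p q s" for s
      using \<open>p \<notin> S\<close> \<open>q \<notin> S\<close> unfolding keeps_sides_def by auto
    then show ?thesis unfolding on_same_edge_def by auto
  next
    assume "swaps_sides f (S \<union> snd ` A) p q"
    then have "s \<in> S \<Longrightarrow> strictly_between (f p) (f q) (f s) = (\<not> strictly_between p q s)" for s
      using \<open>p \<notin> S\<close> \<open>q \<notin> S\<close> unfolding swaps_sides_def by auto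
    then show ?thesis unfolding on_same_edge_def by auto
  qed
qed (simp add: on_same_edge_def)

lemma chords_cross_image:
  assumes a: "a \<in> A" and b: "b \<in> A"
  shows "chords_cross (map_prod f f a) (map_prod f f b) = chords_cross a b"
proof -
  obtain v p w q where ab: "a = (v, p)" "b = (w, q)" by force
  have K: "v \<in> S" "p \<notin> S" "w \<in> S" "q \<notin> S" "p \<in> snd ` A" "q \<in> snd ` A"
    using fcf_configD(3,4)[OF config] a b ab by force+
  have eq: "(f v = f w) = (v = w)" "(f p = f q) = (p = q)"
    using inj_on_points K by (auto dest: inj_onD)
  show ?thesis
  proof (cases "v = w \<or> p = q")
    case False
    have "v \<noteq> p" using K by auto
    have "keeps_sides f (S \<union> snd ` A) v p \<or> swaps_sides f (S \<union> snd ` A) v p"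
      using arc_symmetryD[OF sym _ _ \<open>v \<noteq> p\<close>] K by blast
    then have "(strictly_between (f v) (f p) (f w) \<noteq> strictly_between (f v) (f p) (f q))
        = (strictly_between v p w \<noteq> strictly_between v p q)"
    proof
      assume "keeps_sides f (S \<union> snd ` A) v p"
      then show ?thesis using K False unfolding keeps_sides_def by auto
    next
      assume "swaps_sides f (S \<union> snd ` A) v p"
      then show ?thesis using K False unfolding swaps_sides_def by auto
    qed
    then show ?thesis using ab eq False by (simp add: chords_cross_def)
  qed (use ab eq in \<open>auto simp: chords_cross_def\<close>)
qed

lemma inj_on_map_prod_arrows: "inj_on (map_prod f f) A"
proof (rule inj_onI)
  fix a b assume a: "a \<in> A" and b: "b \<in> A" and eq: "map_prod f f a = map_prod f f b"
  have "f (fst a) = f (fst b)" "f (snd a) = f (snd b)" using eq by (simp_all add: map_prod_def split_beta)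
  moreover have "fst a \<in> S" "fst b \<in> S" using fcf_configD(3)[OF config] a b by auto
  ultimately show "a = b"
    using inj_onD[OF inj_on_points] a b by (metis UnI1 UnI2 image_eqI prod_eqI)
qed

lemma arrow_image:
  assumes a: "a \<in> A"
  shows "f (fst a) \<in> f ` S" "f (snd a) \<notin> f ` S" "\<not> on_incident_edge (f ` S) (f (fst a)) (f (snd a))"
proof -
  note D = fcf_configD[OF config]
  have exit: "snd a \<in> snd ` A" using a by simp
  show "f (fst a) \<in> f ` S" using D(3)[OF a] by simp
  show "f (snd a) \<notin> f ` S"
  proof
    assume "f (snd a) \<in> f ` S"
    then obtain s where "s \<in> S" "f (snd a) = f s" by auto
    then show False using inj_onD[OF inj_on_points] exit D(4)[OF a] by blast
  qed
  show "\<not> on_incident_edge (f ` S) (f (fst a)) (f (snd a))"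
    using on_incident_edge_image[OF D(3)[OF a] exit] D(5)[OF a] by simp
qed

lemma fcf_config_image: "fcf_config (f ` S) (map_prod f f ` A)"
proof -
  note D = fcf_configD[OF config]
  have start_eq: "f (fst a) = f (fst b) \<longleftrightarrow> fst a = fst b" if "a \<in> A" "b \<in> A" for a b
    using inj_on_subset[OF inj_on_points, of S] that D(3) by (simp add: inj_on_eq_iff)
  have "\<forall>a\<in>A. f (fst a) \<in> f ` S \<and> f (snd a) \<notin> f ` S
      \<and> \<not> on_incident_edge (f ` S) (f (fst a)) (f (snd a))"
    using arrow_image by blast
  moreover have "\<forall>a\<in>A. \<forall>b\<in>A. map_prod f f a \<noteq> map_prod f f b \<and> f (fst a) = f (fst b)
      \<longrightarrow> \<not> on_same_edge (f ` S) (f (snd a)) (f (snd b))"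
  proof (intro ballI impI)
    fix a b assume a: "a \<in> A" and b: "b \<in> A"
      and "map_prod f f a \<noteq> map_prod f f b \<and> f (fst a) = f (fst b)"
    then have "a \<noteq> b" "fst a = fst b" using start_eq by auto
    then show "\<not> on_same_edge (f ` S) (f (snd a)) (f (snd b))"
      using D(6)[OF a b] on_same_edge_image[of "snd a" "snd b"] a b by simp
  qed
  moreover have "\<forall>x\<in>A. \<forall>y\<in>A. chords_cross (map_prod f f x) (map_prod f f y)
      \<longrightarrow> \<not> on_incident_edge (f ` S) (f (fst y)) (f (snd x))"
  proof (intro ballI impI)
    fix x y assume x: "x \<in> A" and y: "y \<in> A" and "chords_cross (map_prod f f x) (map_prod f f y)"
    then have "chords_cross x y" using chords_cross_image by simp
    then show "\<not> on_incident_edge (f ` S) (f (fst y)) (f (snd x))"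
      using D(7)[OF x y] on_incident_edge_image[OF D(3)[OF y], of "snd x"] x by simp
  qed
  moreover have "\<forall>x\<in>A. \<forall>y\<in>A. \<forall>z\<in>A. chords_cross (map_prod f f x) (map_prod f f y)
      \<and> chords_cross (map_prod f f x) (map_prod f f z) \<and> map_prod f f y \<noteq> map_prod f f z
      \<and> f (fst y) = f (fst z) \<longrightarrow> False"
    using D(8) chords_cross_image start_eq by metis
  ultimately show ?thesis
    unfolding fcf_config_def Ball_image_comp comp_def fst_map_prod snd_map_prod
    using D(1,2) by blast
qed

lemma counts_image:
  assumes b: "b \<in> A"
  shows "inside_count (f ` S) (map_prod f f b)
      = card {s\<in>S. strictly_between (f (fst b)) (f (snd b)) (f s)}"
    and "outside_count (f ` S) (map_prod f f b)
      = card {s\<in>S. s \<noteq> fst b \<and> \<not> strictly_between (f (fst b)) (f (snd b)) (f s)}"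
proof -
  have injS: "inj_on f S" using inj_on_points by (rule inj_on_subset) blast
  have "{s\<in>f ` S. strictly_between (f (fst b)) (f (snd b)) s}
      = f ` {s\<in>S. strictly_between (f (fst b)) (f (snd b)) (f s)}"
    by auto
  then show "inside_count (f ` S) (map_prod f f b)
      = card {s\<in>S. strictly_between (f (fst b)) (f (snd b)) (f s)}"
    unfolding inside_count_def by (simp add: card_image inj_on_subset[OF injS] map_prod_def split_beta)
  have "s \<in> S \<Longrightarrow> (f s \<noteq> f (fst b)) = (s \<noteq> fst b)" for s
    using injS fcf_configD(3)[OF config b] by (auto simp: inj_on_eq_iff)
  then have "{s\<in>f ` S. s \<noteq> f (fst b) \<and> \<not> strictly_between (f (fst b)) (f (snd b)) s}
      = f ` {s\<in>S. s \<noteq> fst b \<and> \<not> strictly_between (f (fst b)) (f (snd b)) (f s)}"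
    by auto
  then show "outside_count (f ` S) (map_prod f f b)
      = card {s\<in>S. s \<noteq> fst b \<and> \<not> strictly_between (f (fst b)) (f (snd b)) (f s)}"
    unfolding outside_count_def by (simp add: card_image inj_on_subset[OF injS] map_prod_def split_beta)
qed

lemma inside_outside_count_image:
  assumes b: "b \<in> A"
  shows "keeps_sides f (S \<union> snd ` A) (fst b) (snd b) \<Longrightarrow>
      inside_count (f ` S) (map_prod f f b) = inside_count S b \<and>
      outside_count (f ` S) (map_prod f f b) = outside_count S b"
    and "swaps_sides f (S \<union> snd ` A) (fst b) (snd b) \<Longrightarrow>
      inside_count (f ` S) (map_prod f f b) = outside_count S b \<and>
      outside_count (f ` S) (map_prod f f b) = inside_count S b"
proof -
  have q: "snd b \<notin> S" "snd b \<in> snd ` A" using fcf_configD(4)[OF config b] b by auto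
  show "keeps_sides f (S \<union> snd ` A) (fst b) (snd b) \<Longrightarrow>
      inside_count (f ` S) (map_prod f f b) = inside_count S b \<and>
      outside_count (f ` S) (map_prod f f b) = outside_count S b"
  proof -
    assume "keeps_sides f (S \<union> snd ` A) (fst b) (snd b)"
    then have "s \<in> S \<Longrightarrow> strictly_between (f (fst b)) (f (snd b)) (f s) = strictly_between (fst b) (snd b) s"
      for s using q unfolding keeps_sides_def by (cases "s = fst b") auto
    then have "{s\<in>S. strictly_between (f (fst b)) (f (snd b)) (f s)} = {s\<in>S. strictly_between (fst b) (snd b) s}"
      "{s\<in>S. s \<noteq> fst b \<and> \<not> strictly_between (f (fst b)) (f (snd b)) (f s)}
        = {s\<in>S. s \<noteq> fst b \<and> \<not> strictly_between (fst b) (snd b) s}"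
      by auto
    then show ?thesis using counts_image[OF b] by (simp add: inside_count_def outside_count_def)
  qed
  show "swaps_sides f (S \<union> snd ` A) (fst b) (snd b) \<Longrightarrow>
      inside_count (f ` S) (map_prod f f b) = outside_count S b \<and>
      outside_count (f ` S) (map_prod f f b) = inside_count S b"
  proof -
    assume "swaps_sides f (S \<union> snd ` A) (fst b) (snd b)"
    then have "s \<in> S \<Longrightarrow> strictly_between (f (fst b)) (f (snd b)) (f s)
        = (s \<noteq> fst b \<and> \<not> strictly_between (fst b) (snd b) s)"
      for s using q unfolding swaps_sides_def by (cases "s = fst b") auto
    then have "{s\<in>S. strictly_between (f (fst b)) (f (snd b)) (f s)}
        = {s\<in>S. s \<noteq> fst b \<and> \<not> strictly_between (fst b) (snd b) s}"
      "{s\<in>S. s \<noteq> fst b \<and> \<not> strictly_between (f (fst b)) (f (snd b)) (f s)}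
        = {s\<in>S. strictly_between (fst b) (snd b) s}"
      by auto
    then show ?thesis using counts_image[OF b] by (simp add: inside_count_def outside_count_def)
  qed
qed

lemma short_side_image:
  assumes "b \<in> A"
  shows "short_side (f ` S) (map_prod f f b) = short_side S b"
proof -
  have "fst b \<in> S" "snd b \<in> snd ` A" "snd b \<notin> S"
    using fcf_configD(3,4)[OF config assms] assms by auto
  then have "keeps_sides f (S \<union> snd ` A) (fst b) (snd b) \<or> swaps_sides f (S \<union> snd ` A) (fst b) (snd b)"
    by (intro arc_symmetryD[OF sym]) auto
  then show ?thesis
    using inside_outside_count_image[OF assms] unfolding short_side_def by auto
qed

end

lemma finite_diff_less_width:
  assumes "finite (K :: real set)" "x \<in> K" "y \<in> K"
  shows "y - x < Max K - Min K + 1"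
  using assms Max_ge[OF assms(1,3)] Min_le[OF assms(1,2)] by linarith

lemma exists_arc_symmetry_start:
  assumes "finite K" "v \<in> K"
  shows "\<exists>f. arc_symmetry f K \<and> f v = v \<and> (\<forall>x\<in>K. v \<le> f x)"
proof (intro exI conjI ballI)
  define T where "T = Max K - Min K + 1"
  have T: "\<forall>x\<in>K. \<forall>y\<in>K. y - x < T" using finite_diff_less_width[OF assms(1)] by (simp add: T_def)
  show "arc_symmetry (cyclic_shift v T) K" by (rule arc_symmetry_cyclic_shift[OF T])
  show "cyclic_shift v T v = v" by (simp add: cyclic_shift_def)
  fix x assume "x \<in> K"
  then show "v \<le> cyclic_shift v T x" using T assms(2) by (fastforce simp: cyclic_shift_def)
qed

lemma exists_arc_symmetry_reflect:
  assumes K: "finite K" "v \<in> K" "p \<in> K" "v \<noteq> p" and v_min: "\<forall>x\<in>K. v \<le> x"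
  shows "\<exists>g. arc_symmetry g K \<and> (\<forall>x\<in>K. g v \<le> g x) \<and> swaps_sides g K v p"
proof (intro exI conjI ballI)
  define T where "T = Max K - Min K + 1"
  have T: "\<forall>x\<in>K. \<forall>y\<in>K. y - x < T" using finite_diff_less_width[OF K(1)] by (simp add: T_def)
  define g where "g = cyclic_shift (- v) T \<circ> uminus"
  have g: "x \<in> K \<Longrightarrow> g x = (if v < x then T - x else - x)" for x
    by (simp add: g_def cyclic_shift_def)
  have "arc_symmetry uminus K"
    by (auto simp: arc_symmetry_def keeps_sides_def strictly_between_def min_def max_def)
  moreover have "arc_symmetry (cyclic_shift (- v) T) (uminus ` K)"
    by (rule arc_symmetry_cyclic_shift) (use T in auto)
  ultimately show "arc_symmetry g K" unfolding g_def by (rule arc_symmetry_comp)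
  show "g v \<le> g x" if "x \<in> K" for x
    using g that K(2) v_min T by fastforce
  show "swaps_sides g K v p"
    unfolding swaps_sides_def
  proof (intro ballI impI)
    fix s assume "s \<in> K" "s \<noteq> v \<and> s \<noteq> p"
    moreover have "v < p" "v < s" using v_min K \<open>s \<in> K\<close> \<open>s \<noteq> v \<and> s \<noteq> p\<close> by force+
    moreover have "p - v < T" "s - v < T" using T K \<open>s \<in> K\<close> by auto
    ultimately show "strictly_between (g v) (g p) (g s) = (\<not> strictly_between v p s)"
      using g K by (auto simp: strictly_between_def)
  qed
qed

lemma fcf_config_normalize:
  assumes config: "fcf_config S A" and a: "a \<in> A"
  shows "\<exists>f. arc_symmetry f (S \<union> snd ` A) \<and> (\<forall>x\<in>S \<union> snd ` A. f (fst a) \<le> f x)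
    \<and> inside_count (f ` S) (map_prod f f a) = short_side S a"
proof -
  define K where "K = S \<union> snd ` A"
  have fin: "finite K" using fcf_configD(1,2)[OF config] by (simp add: K_def)
  have v: "fst a \<in> K" using fcf_configD(3)[OF config a] by (simp add: K_def)
  obtain f where f: "arc_symmetry f K" "f (fst a) = fst a" "\<forall>x\<in>K. fst a \<le> f x"
    using exists_arc_symmetry_start[OF fin v] by blast
  define S1 A1 a1 where "S1 = f ` S" and "A1 = map_prod f f ` A" and "a1 = map_prod f f a"
  have K1: "S1 \<union> snd ` A1 = f ` K"
    by (force simp: S1_def A1_def K_def image_Un image_image)
  have config1: "fcf_config S1 A1" "a1 \<in> A1"
    using fcf_config_image[OF config] f(1) a by (auto simp: S1_def A1_def a1_def K_def)
  have short1: "short_side S1 a1 = short_side S a"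
    using short_side_image[OF config] f(1) a by (simp add: S1_def a1_def K_def)
  show ?thesis
  proof (cases "inside_count S1 a1 \<le> outside_count S1 a1")
    case True
    then show ?thesis
      using f short1 by (intro exI[of _ f]) (auto simp: K_def S1_def a1_def short_side_def)
  next
    case False
    have v1: "fst a1 \<in> f ` K" "snd a1 \<in> f ` K" "fst a1 \<noteq> snd a1"
      using fcf_configD(3,4)[OF config1] config1(2) unfolding K1[symmetric] by auto
    have "\<forall>x\<in>f ` K. fst a1 \<le> x" using f(2,3) by (simp add: a1_def)
    then obtain g where g: "arc_symmetry g (f ` K)" "\<forall>x\<in>f ` K. g (fst a1) \<le> g x"
        "swaps_sides g (f ` K) (fst a1) (snd a1)"
      using exists_arc_symmetry_reflect[OF finite_imageI[OF fin] v1] by blast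
    have "inside_count (g ` S1) (map_prod g g a1) = outside_count S1 a1"
      using inside_outside_count_image(2)[OF config1(1) _ config1(2)] g(1,3) K1 by simp
    then have "inside_count ((g \<circ> f) ` S) (map_prod (g \<circ> f) (g \<circ> f) a) = short_side S a"
      using False short1 by (simp add: S1_def a1_def short_side_def image_comp map_prod_compose)
    moreover have "arc_symmetry (g \<circ> f) K" by (rule arc_symmetry_comp[OF f(1) g(1)])
    ultimately show ?thesis
      using g(2) f(2) by (intro exI[of _ "g \<circ> f"]) (auto simp: K_def a1_def)
  qed
qed

section \<open>Deleting the vertex after the start of a shortest arrow\<close>

locale shortest_arrow_config =
  fixes S :: "real set" and A :: "(real \<times> real) set" and v p :: real
  assumes config: "fcf_config S A"
    and three_vertices: "3 \<le> card S"
    and arrow: "(v, p) \<in> A"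
    and start_min: "\<forall>x\<in>S \<union> snd ` A. v \<le> x"
    and shortest: "\<forall>b\<in>A. inside_count S (v, p) \<le> short_side S b"
begin

lemma finite_S: "finite S" and finite_A: "finite A"
  using fcf_configD(1,2)[OF config] .

lemma v_in_S: "v \<in> S" and p_notin_S: "p \<notin> S" and p_not_incident: "\<not> on_incident_edge S v p"
  using fcf_configD(3-5)[OF config arrow] by simp_all

lemma vertex_ge_v: "s \<in> S \<Longrightarrow> v \<le> s"
  using start_min by blast

lemma v_less_exit: "b \<in> A \<Longrightarrow> v < snd b"
  using start_min fcf_configD(4)[OF config] v_in_S by (metis Un_iff image_eqI order_le_imp_less_or_eq)

lemma v_less_p: "v < p"
  using v_less_exit[OF arrow] by simp

definition u :: real where "u = Min (S - {v})"

definition w :: real where "w = Min (S - {v, u})"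

lemma u_in_S: "u \<in> S" "u \<noteq> v" and u_le: "s \<in> S \<Longrightarrow> s \<noteq> v \<Longrightarrow> u \<le> s"
proof -
  have "card S \<le> card {v}" if "S - {v} = {}"
    using that finite_S by (intro card_mono) auto
  then have "S - {v} \<noteq> {}" using three_vertices by auto
  then have "u \<in> S - {v}" unfolding u_def using finite_S by (intro Min_in) auto
  then show "u \<in> S" "u \<noteq> v" by auto
  show "s \<in> S \<Longrightarrow> s \<noteq> v \<Longrightarrow> u \<le> s" unfolding u_def by (rule Min_le) (use finite_S in auto)
qed

lemma w_in_S: "w \<in> S" "w \<noteq> v" "w \<noteq> u" and w_le: "s \<in> S \<Longrightarrow> s \<noteq> v \<Longrightarrow> s \<noteq> u \<Longrightarrow> w \<le> s"
proof -
  have "card S \<le> card {v, u}" if "S - {v, u} = {}"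
    using that finite_S by (intro card_mono) auto
  moreover have "card {v, u} \<le> 2" by (rule card_insert_le_m1) auto
  ultimately have "S - {v, u} \<noteq> {}" using three_vertices by auto
  then have "w \<in> S - {v, u}" unfolding w_def using finite_S by (intro Min_in) auto
  then show "w \<in> S" "w \<noteq> v" "w \<noteq> u" by auto
  show "s \<in> S \<Longrightarrow> s \<noteq> v \<Longrightarrow> s \<noteq> u \<Longrightarrow> w \<le> s"
    unfolding w_def by (rule Min_le) (use finite_S in auto)
qed

lemma v_less_u: "v < u" and u_less_w: "u < w"
  using vertex_ge_v[OF u_in_S(1)] u_in_S(2) u_le[OF w_in_S(1,2)] w_in_S(3) by auto

lemma u_less_p: "u < p"
proof -
  obtain s where "s \<in> S" "s \<noteq> v" "strictly_between v p s"
    using p_not_incident by (auto simp: on_incident_edge_def)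
  then show ?thesis using u_le[of s] v_less_p by (auto simp: strictly_between_def)
qed

lemma inside_count_arrow: "inside_count S (v, p) = card {s\<in>S. v < s \<and> s < p}"
  using v_less_p by (simp add: inside_count_def strictly_between_def)

lemma u_inside: "u \<in> {s\<in>S. v < s \<and> s < p}"
  using u_in_S v_less_u u_less_p by simp

lemma inside_not_smaller:
  assumes b: "b \<in> A" and x: "x \<in> {s\<in>S. v < s \<and> s < p}"
    and sub: "{s\<in>S. strictly_between (fst b) (snd b) s} \<subseteq> {s\<in>S. v < s \<and> s < p} - {x}"
  shows False
proof -
  have "inside_count S b \<le> card ({s\<in>S. v < s \<and> s < p} - {x})"
    unfolding inside_count_def using finite_S sub by (intro card_mono) auto
  also have "\<dots> < inside_count S (v, p)"
    unfolding inside_count_arrow using finite_S x by (intro card_Diff1_less) auto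
  finally show False using shortest b by (auto simp: short_side_def)
qed

lemma incident_before_u:
  assumes "v < q" "q < u"
  shows "on_incident_edge S v q" "on_incident_edge S u q"
proof -
  show "on_incident_edge S v q"
    unfolding on_incident_edge_def strictly_between_def using assms u_le by fastforce
  have "\<not> strictly_between u q s" if "s \<in> S" "s \<noteq> u" for s
    using assms that u_le[of s] vertex_ge_v[of s] by (auto simp: strictly_between_def)
  then show "on_incident_edge S u q" by (simp add: on_incident_edge_def)
qed

lemma u_less_exit:
  assumes b: "b \<in> A"
  shows "u < snd b"
proof (rule ccontr)
  obtain x q where bx: "b = (x, q)" by force
  have x: "x \<in> S" and q: "q \<notin> S" "\<not> on_incident_edge S x q"
    using fcf_configD(3-5)[OF config b] bx by auto
  assume "\<not> u < snd b"
  moreover have "q \<noteq> u" using q(1) u_in_S(1) by auto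
  ultimately have vq: "v < q" "q < u" using v_less_exit[OF b] bx by auto
  consider "x = v" | "x = u" | "x \<noteq> v" "x \<noteq> u" "x < p" | "x \<noteq> v" "x \<noteq> u" "p < x"
    using x p_notin_S by fastforce
  then show False
  proof cases
    case 3
    then have "{s\<in>S. strictly_between (fst b) (snd b) s} \<subseteq> {s\<in>S. v < s \<and> s < p} - {x}"
      using bx vq u_le[OF x] by (auto simp: strictly_between_def)
    then show False using inside_not_smaller[OF b] 3 x vertex_ge_v[OF x] by force
  next
    case 4
    then have "chords_cross b (v, p)"
      using bx vq u_less_p v_less_u by (auto simp: chords_cross_def strictly_between_def)
    then show False using fcf_configD(7)[OF config b arrow] incident_before_u(1)[OF vq] bx by simp
  qed (use q incident_before_u[OF vq] in auto)
qed

definition arrows_from_u :: "(real \<times> real) set" where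
  "arrows_from_u = {b\<in>A. fst b = u}"

definition arrows_over_u :: "(real \<times> real) set" where
  "arrows_over_u = {b\<in>A. fst b = v \<and> u < snd b \<and> snd b < w}"

definition crossed_from_v :: "(real \<times> real) set" where
  "crossed_from_v = {y\<in>A. fst y = v \<and> w < snd y \<and> (\<exists>x\<in>A. u < snd x \<and> snd x < w \<and> chords_cross x y)}"

lemma arrow_from_u_crosses:
  assumes b: "b \<in> arrows_from_u"
  shows "chords_cross (v, p) b"
proof -
  have b: "b \<in> A" "fst b = u" using b by (auto simp: arrows_from_u_def)
  have "\<not> snd b < p"
  proof
    assume "snd b < p"
    then have "{s\<in>S. strictly_between (fst b) (snd b) s} \<subseteq> {s\<in>S. v < s \<and> s < p} - {u}"
      using b u_less_exit[OF b(1)] v_less_u by (auto simp: strictly_between_def)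
    then show False using inside_not_smaller[OF b(1) u_inside] by simp
  qed
  then show ?thesis
    using b u_less_exit[OF b(1)] v_less_u u_less_p by (auto simp: chords_cross_def strictly_between_def)
qed

lemma card_arrows_from_u: "card arrows_from_u \<le> 1"
proof -
  have "b1 = b2" if "b1 \<in> arrows_from_u" "b2 \<in> arrows_from_u" for b1 b2
    using fcf_configD(8)[OF config arrow _ _ arrow_from_u_crosses[OF that(1)] arrow_from_u_crosses[OF that(2)]]
      that by (auto simp: arrows_from_u_def)
  then show ?thesis using finite_A by (simp add: card_le_Suc0_iff_eq arrows_from_u_def)
qed

lemma arrows_from_u_empty:
  assumes "inside_count S (v, p) = 1"
  shows "arrows_from_u = {}"
proof -
  have single: "\<forall>x\<in>{s\<in>S. v < s \<and> s < p}. \<forall>y\<in>{s\<in>S. v < s \<and> s < p}. x = y"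
    by (subst card_le_Suc0_iff_eq[symmetric]) (use assms finite_S in \<open>auto simp: inside_count_arrow\<close>)
  have "\<not> strictly_between u p s" if "s \<in> S" "s \<noteq> u" for s
  proof
    assume "strictly_between u p s"
    then have "s \<in> {s\<in>S. v < s \<and> s < p}"
      using that v_less_u u_less_p by (auto simp: strictly_between_def)
    then show False using single u_inside that(2) by blast
  qed
  then have "on_incident_edge S u p" by (simp add: on_incident_edge_def)
  then have "\<not> chords_cross (v, p) b" if "b \<in> arrows_from_u" for b
    using fcf_configD(7)[OF config arrow, of b] that by (auto simp: arrows_from_u_def)
  then show ?thesis using arrow_from_u_crosses by blast
qed

lemma inside_count_arrow_over_u:
  assumes "b \<in> arrows_over_u"
  shows "inside_count S b = 1"
proof -
  have b: "b \<in> A" "fst b = v" "u < snd b" "snd b < w" using assms by (auto simp: arrows_over_u_def)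
  have "{s\<in>S. strictly_between (fst b) (snd b) s} = {u}"
  proof (intro equalityI subsetI)
    fix s assume "s \<in> {s\<in>S. strictly_between (fst b) (snd b) s}"
    then have "s \<in> S" "v < s" "s < snd b" using b v_less_u by (auto simp: strictly_between_def)
    then show "s \<in> {u}" using w_le[of s] b by force
  qed (use b u_in_S v_less_u in \<open>auto simp: strictly_between_def\<close>)
  then show ?thesis by (simp add: inside_count_def)
qed

lemma arrows_over_u_empty:
  assumes "2 \<le> inside_count S (v, p)"
  shows "arrows_over_u = {}"
proof -
  have "inside_count S (v, p) \<le> 1" if "b \<in> arrows_over_u" for b
  proof -
    have "b \<in> A" using that by (simp add: arrows_over_u_def)
    then have "inside_count S (v, p) \<le> short_side S b" using shortest by blast
    then show ?thesis using inside_count_arrow_over_u[OF that] by (simp add: short_side_def)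
  qed
  then show ?thesis using assms by fastforce
qed

lemma card_arrows_over_u: "card arrows_over_u \<le> 1"
proof -
  have "b1 = b2" if "b1 \<in> arrows_over_u" "b2 \<in> arrows_over_u" for b1 b2
  proof (rule ccontr)
    assume "b1 \<noteq> b2"
    have b: "b1 \<in> A" "b2 \<in> A" "fst b1 = v" "fst b2 = v" "u < snd b1" "snd b1 < w" "u < snd b2" "snd b2 < w"
      using that by (auto simp: arrows_over_u_def)
    have "\<not> strictly_between (snd b1) (snd b2) s" if "s \<in> S" for s
    proof
      assume "strictly_between (snd b1) (snd b2) s"
      then have "u < s" "s < w" using b by (auto simp: strictly_between_def)
      then show False using that w_le[of s] v_less_u by fastforce
    qed
    then have "on_same_edge S (snd b1) (snd b2)" by (simp add: on_same_edge_def)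
    then show False using fcf_configD(6)[OF config b(1,2) \<open>b1 \<noteq> b2\<close>] b by simp
  qed
  then show ?thesis using finite_A by (simp add: card_le_Suc0_iff_eq arrows_over_u_def)
qed

lemma crossing_start_beyond:
  assumes y: "y \<in> crossed_from_v" and x: "x \<in> A" "u < snd x" "snd x < w" "chords_cross x y"
  shows "snd y < fst x"
proof -
  have y: "y \<in> A" "fst y = v" "w < snd y" using y by (auto simp: crossed_from_v_def)
  have cross: "chords_cross y x" using fcf_config_chords_cross_sym[OF config x(1) y(1) x(4)] .
  have "fst x \<in> S" using fcf_configD(3)[OF config x(1)] .
  moreover have "fst x \<noteq> snd y" using calculation fcf_configD(4)[OF config y(1)] by auto
  moreover have "fst x \<noteq> v" using cross y by (auto simp: chords_cross_def)
  moreover have "strictly_between v (snd y) (snd x)" using x y v_less_u u_less_w by (auto simp: strictly_between_def)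
  ultimately show ?thesis
    using cross y vertex_ge_v[of "fst x"] by (auto simp: chords_cross_def strictly_between_def)
qed

lemma card_crossed_from_v: "card crossed_from_v \<le> 1"
proof -
  have "False" if y1: "y1 \<in> crossed_from_v" and y2: "y2 \<in> crossed_from_v" and lt: "snd y1 < snd y2" for y1 y2
  proof -
    obtain x where x: "x \<in> A" "u < snd x" "snd x < w" "chords_cross x y2"
      using y2 by (auto simp: crossed_from_v_def)
    have y: "y1 \<in> A" "fst y1 = v" "w < snd y1" "y2 \<in> A" "fst y2 = v"
      using y1 y2 by (auto simp: crossed_from_v_def)
    have "snd y2 < fst x" using crossing_start_beyond[OF y2 x] .
    then have "chords_cross y1 x"
      using x y lt v_less_u u_less_w by (auto simp: chords_cross_def strictly_between_def)
    then have "chords_cross x y1" using fcf_config_chords_cross_sym[OF config y(1) x(1)] by simp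
    then show False using fcf_configD(8)[OF config x(1) y(1,4) _ x(4)] y lt by auto
  qed
  moreover have "fst y1 = fst y2" if "y1 \<in> crossed_from_v" "y2 \<in> crossed_from_v" for y1 y2
    using that by (simp add: crossed_from_v_def)
  ultimately have "y1 = y2" if "y1 \<in> crossed_from_v" "y2 \<in> crossed_from_v" for y1 y2
    using that by (metis linorder_neqE_linordered_idom prod_eqI)
  then show ?thesis using finite_A by (simp add: card_le_Suc0_iff_eq crossed_from_v_def)
qed

lemma on_incident_edge_remove_u:
  assumes x: "x \<in> S" "x \<noteq> u" and q: "q \<notin> S" "u < q"
    and incident: "on_incident_edge (S - {u}) x q" and not_incident: "\<not> on_incident_edge S x q"
  shows "x = v \<and> q < w"
proof -
  obtain s1 where s1: "s1 \<in> S" "s1 \<noteq> x" "strictly_between x q s1"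
    using not_incident by (auto simp: on_incident_edge_def)
  obtain s2 where s2: "s2 \<in> S" "s2 \<noteq> x" "\<not> strictly_between x q s2"
    using not_incident by (auto simp: on_incident_edge_def)
  consider (none) "\<forall>s\<in>S - {u}. s \<noteq> x \<longrightarrow> \<not> strictly_between x q s"
    | (all) "\<forall>s\<in>S - {u}. s \<noteq> x \<longrightarrow> strictly_between x q s"
    using incident by (auto simp: on_incident_edge_def)
  then show ?thesis
  proof cases
    case none
    then have "strictly_between x q u" using s1 by (cases "s1 = u") auto
    then have "x < u" using q by (auto simp: strictly_between_def)
    then have xv: "x = v" using u_le[OF x(1)] by fastforce
    have "q < w"
    proof (rule ccontr)
      assume "\<not> q < w"
      then have "w < q" using q(1) w_in_S(1) by (cases "w = q") auto
      then show False using none w_in_S xv v_less_u u_less_w by (auto simp: strictly_between_def)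
    qed
    then show ?thesis using xv by simp
  next
    case all
    have "x = v"
    proof (rule ccontr)
      assume "x \<noteq> v"
      then have "strictly_between x q v" using all v_in_S u_in_S by auto
      then show False using vertex_ge_v[OF x(1)] v_less_u q by (auto simp: strictly_between_def)
    qed
    then have "strictly_between x q u" using v_less_u q by (auto simp: strictly_between_def)
    moreover have "s2 = u" using all s2 by auto
    ultimately show ?thesis using s2 by simp
  qed
qed

lemma on_same_edge_remove_u:
  assumes "u < q1" "u < q2" and same: "on_same_edge (S - {u}) q1 q2"
  shows "on_same_edge S q1 q2"
proof -
  have "\<not> strictly_between q1 q2 u" "\<not> strictly_between q1 q2 v"
    using assms(1,2) v_less_u by (auto simp: strictly_between_def)
  then show ?thesis
    using same v_in_S u_in_S(2) unfolding on_same_edge_def by auto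
qed

definition dropped_arrows :: "(real \<times> real) set" where
  "dropped_arrows = arrows_from_u \<union> arrows_over_u \<union> crossed_from_v"

lemma card_dropped_arrows: "card dropped_arrows \<le> 2"
proof -
  have "card arrows_from_u + card arrows_over_u \<le> 1"
  proof (cases "inside_count S (v, p) = 1")
    case True
    then show ?thesis using arrows_from_u_empty card_arrows_over_u by simp
  next
    case False
    have "{s\<in>S. v < s \<and> s < p} \<noteq> {}" using u_inside by blast
    then have "0 < inside_count S (v, p)"
      unfolding inside_count_arrow using finite_S by (simp add: card_gt_0_iff)
    then show ?thesis using False arrows_over_u_empty card_arrows_from_u by simp
  qed
  moreover have "card dropped_arrows \<le> card arrows_from_u + card arrows_over_u + card crossed_from_v"
    using card_Un_le[of arrows_from_u arrows_over_u]
      card_Un_le[of "arrows_from_u \<union> arrows_over_u" crossed_from_v]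
    unfolding dropped_arrows_def by linarith
  ultimately show ?thesis using card_crossed_from_v by simp
qed

lemma card_le_remaining_arrows: "card A \<le> card (A - dropped_arrows) + 2"
proof -
  have sub: "dropped_arrows \<subseteq> A"
    by (auto simp: dropped_arrows_def arrows_from_u_def arrows_over_u_def crossed_from_v_def)
  then have "card (A - dropped_arrows) = card A - card dropped_arrows"
    using finite_subset[OF sub finite_A] by (rule card_Diff_subset[rotated])
  moreover have "card dropped_arrows \<le> card A" using sub finite_A by (rule card_mono[rotated])
  ultimately show ?thesis using card_dropped_arrows by linarith
qed

lemma remaining_arrow_not_incident:
  assumes b: "b \<in> A - dropped_arrows"
  shows "\<not> on_incident_edge (S - {u}) (fst b) (snd b)"
proof
  assume incident: "on_incident_edge (S - {u}) (fst b) (snd b)"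
  have "b \<in> A" "fst b \<noteq> u" using b by (auto simp: dropped_arrows_def arrows_from_u_def)
  then have "fst b = v \<and> snd b < w"
    using on_incident_edge_remove_u[OF _ _ _ u_less_exit incident] fcf_configD(3-5)[OF config]
    by blast
  then have "b \<in> arrows_over_u" using \<open>b \<in> A\<close> u_less_exit by (simp add: arrows_over_u_def)
  then show False using b by (simp add: dropped_arrows_def)
qed

lemma remaining_crossing_not_incident:
  assumes x: "x \<in> A - dropped_arrows" and y: "y \<in> A - dropped_arrows" and cross: "chords_cross x y"
  shows "\<not> on_incident_edge (S - {u}) (fst y) (snd x)"
proof
  assume incident: "on_incident_edge (S - {u}) (fst y) (snd x)"
  have "x \<in> A" "y \<in> A" "fst y \<noteq> u" using x y by (auto simp: dropped_arrows_def arrows_from_u_def)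
  then have yv: "fst y = v" and "snd x < w"
    using on_incident_edge_remove_u[OF _ _ _ u_less_exit incident] fcf_configD(3,4,7)[OF config]
      cross by blast+
  moreover have "snd y \<noteq> w" using fcf_configD(4)[OF config \<open>y \<in> A\<close>] w_in_S(1) by auto
  moreover have "y \<notin> arrows_over_u" using y by (simp add: dropped_arrows_def)
  ultimately have "w < snd y" using \<open>y \<in> A\<close> u_less_exit[of y] by (auto simp: arrows_over_u_def)
  then have "y \<in> crossed_from_v"
    using \<open>x \<in> A\<close> \<open>y \<in> A\<close> yv \<open>snd x < w\<close> u_less_exit cross by (auto simp: crossed_from_v_def)
  then show False using y by (simp add: dropped_arrows_def)
qed

lemma fcf_config_remove_u: "fcf_config (S - {u}) (A - dropped_arrows)"
proof -
  note D = fcf_configD[OF config]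
  have "fst b \<in> S - {u}" "snd b \<notin> S - {u}" if "b \<in> A - dropped_arrows" for b
    using that D(3,4) by (auto simp: dropped_arrows_def arrows_from_u_def)
  moreover have "\<not> on_same_edge (S - {u}) (snd a) (snd b)"
    if "a \<in> A - dropped_arrows" "b \<in> A - dropped_arrows" "a \<noteq> b" "fst a = fst b" for a b
    using that D(6) on_same_edge_remove_u u_less_exit by blast
  ultimately show ?thesis
    using finite_S finite_A D(8) remaining_arrow_not_incident remaining_crossing_not_incident
    unfolding fcf_config_def by blast
qed

(* u and w are defined in terms of S, so rewriting with S = {v, u, w} would loop; only this
   case distinction is used. *)
lemma triangle_vertices:
  assumes "card S = 3" "s \<in> S"
  shows "s = v \<or> s = u \<or> s = w"
proof -
  have "{v, u, w} \<subseteq> S" using v_in_S u_in_S w_in_S by auto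
  moreover have "card {v, u, w} = 3" using v_less_u u_less_w by auto
  ultimately have "{v, u, w} = S" using assms(1) finite_S by (intro card_subset_eq) auto
  then show ?thesis using assms(2) by blast
qed

lemma triangle_incidences:
  assumes S: "card S = 3" and q: "u < q" "q \<notin> S"
  shows "on_incident_edge S w q"
    and "q < w \<Longrightarrow> on_incident_edge S u q"
    and "\<not> on_incident_edge S v q \<Longrightarrow> q < w"
proof -
  note S = triangle_vertices[OF S]
  have "q \<noteq> w" using q(2) w_in_S(1) by auto
  then have "\<forall>s\<in>S. s \<noteq> w \<longrightarrow> \<not> strictly_between w q s"
    using q(1) v_less_u u_less_w by (cases "q < w") (auto simp: strictly_between_less dest!: S)
  then show "on_incident_edge S w q" by (simp add: on_incident_edge_def)
  show "on_incident_edge S u q" if "q < w"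
  proof -
    have "\<forall>s\<in>S. s \<noteq> u \<longrightarrow> \<not> strictly_between u q s"
      using that q(1) v_less_u by (auto simp: strictly_between_less dest!: S)
    then show ?thesis by (simp add: on_incident_edge_def)
  qed
  show "q < w" if "\<not> on_incident_edge S v q"
  proof (rule ccontr)
    assume "\<not> q < w"
    then have "w < q" using \<open>q \<noteq> w\<close> by simp
    then have "\<forall>s\<in>S. s \<noteq> v \<longrightarrow> strictly_between v q s"
      using q(1) v_less_u u_less_w by (auto simp: strictly_between_less dest!: S)
    then show False using that by (simp add: on_incident_edge_def)
  qed
qed

lemma triangle_single_arrow:
  assumes S: "card S = 3"
  shows "A \<subseteq> {(v, p)}"
proof
  have p: "p < w" using triangle_incidences(3)[OF S u_less_p p_notin_S p_not_incident] .
  fix b assume b: "b \<in> A"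
  have q: "u < snd b" "snd b \<notin> S" "\<not> on_incident_edge S (fst b) (snd b)"
    using fcf_configD(4,5)[OF config b] u_less_exit[OF b] by auto
  consider "fst b = v" | "fst b = u" | "fst b = w"
    using triangle_vertices[OF S fcf_configD(3)[OF config b]] by blast
  then show "b \<in> {(v, p)}"
  proof cases
    case 1
    then have "snd b < w" using triangle_incidences(3)[OF S q(1,2)] q(3) by simp
    then have "\<forall>s\<in>S. \<not> strictly_between p (snd b) s"
      using p u_less_p q(1) v_less_u by (auto simp: strictly_between_def dest!: triangle_vertices[OF S])
    then have "on_same_edge S p (snd b)" by (simp add: on_same_edge_def)
    then have "(v, p) = b" using fcf_configD(6)[OF config arrow b] 1 by auto
    then show ?thesis by simp
  next
    case 2
    then have "b \<in> arrows_from_u" using b by (simp add: arrows_from_u_def)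
    then have "chords_cross (v, p) b" by (rule arrow_from_u_crosses)
    then show ?thesis
      using fcf_configD(7)[OF config arrow b] triangle_incidences(2)[OF S u_less_p p_notin_S p] 2 by simp
  next
    case 3
    then show ?thesis using q triangle_incidences(1)[OF S q(1,2)] by simp
  qed
qed

end

lemma exists_shortest_arrow_config:
  assumes config: "fcf_config S A" and "3 \<le> card S" "A \<noteq> {}"
  shows "\<exists>S' A' v p. shortest_arrow_config S' A' v p \<and> card S' = card S \<and> card A' = card A"
proof -
  obtain a where a: "a \<in> A" and a_min: "\<forall>b\<in>A. short_side S a \<le> short_side S b"
    using fcf_configD(2)[OF config] \<open>A \<noteq> {}\<close> by (metis arg_min_if_finite(1,2) not_less)
  obtain f where f: "arc_symmetry f (S \<union> snd ` A)" "\<forall>x\<in>S \<union> snd ` A. f (fst a) \<le> f x"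
      "inside_count (f ` S) (map_prod f f a) = short_side S a"
    using fcf_config_normalize[OF config a] by blast
  define S' A' where "S' = f ` S" and "A' = map_prod f f ` A"
  have config': "fcf_config S' A'" using fcf_config_image[OF config f(1)] by (simp add: S'_def A'_def)
  have cards: "card S' = card S" "card A' = card A"
    using inj_on_subset[OF inj_on_points[OF config f(1)]] inj_on_map_prod_arrows[OF config f(1)]
    by (auto simp: S'_def A'_def card_image)
  have "shortest_arrow_config S' A' (f (fst a)) (f (snd a))"
  proof
    show "(f (fst a), f (snd a)) \<in> A'" using a by (force simp: A'_def)
    show "\<forall>x\<in>S' \<union> snd ` A'. f (fst a) \<le> x" using f(2) by (force simp: S'_def A'_def)
    show "\<forall>b\<in>A'. inside_count S' (f (fst a), f (snd a)) \<le> short_side S' b"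
      using f(3) a_min short_side_image[OF config f(1)] by (auto simp: S'_def A'_def map_prod_def split_beta)
  qed (use config' cards \<open>3 \<le> card S\<close> in auto)
  then show ?thesis using cards by blast
qed

theorem fcf_config_card_le:
  assumes "fcf_config S A" "3 \<le> card S"
  shows "card A \<le> 2 * card S - 5"
  using assms
proof (induction "card S" arbitrary: S A rule: less_induct)
  case less
  show ?case
  proof (cases "A = {}")
    case False
    then obtain S' A' v p where conf: "shortest_arrow_config S' A' v p"
      and cards: "card S' = card S" "card A' = card A"
      using exists_shortest_arrow_config[OF less.prems] by blast
    interpret shortest_arrow_config S' A' v p by (rule conf)
    show ?thesis
    proof (cases "card S = 3")
      case True
      then have "card A' \<le> card {(v, p)}"
        using triangle_single_arrow cards by (intro card_mono) auto
      then show ?thesis using True cards by simp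
    next
      case False
      have smaller: "card (S' - {u}) = card S - 1"
        using finite_S u_in_S(1) cards by simp
      then have "card (A' - dropped_arrows) \<le> 2 * card (S' - {u}) - 5"
        using less.hyps[OF _ fcf_config_remove_u] False less.prems(2) by simp
      then show ?thesis using card_le_remaining_arrows smaller cards False less.prems(2) by linarith
    qed
  qed simp
qed

section \<open>The boundary of the regular polygon\<close>

definition orient :: "complex \<Rightarrow> complex \<Rightarrow> complex \<Rightarrow> real" where
  "orient P Q R = (Re Q - Re P) * (Im R - Im P) - (Im Q - Im P) * (Re R - Re P)"

lemma orient_cycle: "orient P Q R = orient Q R P"
  by (simp add: orient_def algebra_simps)

lemma orient_affine:
  "orient ((1 - l) *\<^sub>R A + l *\<^sub>R B) Q R = (1 - l) * orient A Q R + l * orient B Q R"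
  "orient P ((1 - l) *\<^sub>R A + l *\<^sub>R B) R = (1 - l) * orient P A R + l * orient P B R"
  "orient P Q ((1 - l) *\<^sub>R A + l *\<^sub>R B) = (1 - l) * orient P Q A + l * orient P Q B"
  by (simp_all add: orient_def algebra_simps)

lemma orient_collinear:
  "orient ((1 - l1) *\<^sub>R A + l1 *\<^sub>R B) ((1 - l2) *\<^sub>R A + l2 *\<^sub>R B) R = (l2 - l1) * orient A B R"
  by (simp add: orient_def algebra_simps)

lemma convex_comb_nonneg: "0 \<le> (l::real) \<Longrightarrow> l \<le> 1 \<Longrightarrow> 0 \<le> P \<Longrightarrow> 0 \<le> Q \<Longrightarrow> 0 \<le> (1 - l) * P + l * Q"
  by simp

lemma convex_comb_pos_left: "0 \<le> (l::real) \<Longrightarrow> l < 1 \<Longrightarrow> 0 < P \<Longrightarrow> 0 \<le> Q \<Longrightarrow> 0 < (1 - l) * P + l * Q"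
  by (simp add: add_pos_nonneg)

lemma convex_comb_pos_right: "0 < (l::real) \<Longrightarrow> l \<le> 1 \<Longrightarrow> 0 \<le> P \<Longrightarrow> 0 < Q \<Longrightarrow> 0 < (1 - l) * P + l * Q"
  by (simp add: add_nonneg_pos)

lemma diagonals_intersect:
  assumes "orient P1 P2 P3 > 0" "orient P1 P2 P4 > 0" "orient P1 P3 P4 > 0" "orient P2 P3 P4 > 0"
  shows "closed_segment P1 P3 \<inter> closed_segment P2 P4 \<noteq> {}"
proof -
  define D where "D = orient P1 P2 P4 + orient P2 P3 P4"
  have D': "D = orient P1 P2 P3 + orient P1 P3 P4" unfolding D_def orient_def by algebra
  have D_pos: "D > 0" using assms by (simp add: D_def)
  \<comment> \<open>the diagonals meet at the point whose weights are these ratios of triangle areas\<close>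
  define s l where "s = orient P1 P2 P4 / D" and "l = orient P1 P2 P3 / D"
  have s: "0 \<le> s" "s \<le> 1" using assms D_pos by (simp_all add: s_def D_def divide_le_eq)
  have l: "0 \<le> l" "l \<le> 1" using assms D_pos D' by (simp_all add: l_def divide_le_eq)
  have eq: "(1 - s) *\<^sub>R P1 + s *\<^sub>R P3 = (1 - l) *\<^sub>R P2 + l *\<^sub>R P4"
  proof (rule complex_eqI)
    show "Re ((1 - s) *\<^sub>R P1 + s *\<^sub>R P3) = Re ((1 - l) *\<^sub>R P2 + l *\<^sub>R P4)"
      using D_pos unfolding s_def l_def by (simp add: field_simps) (simp add: D_def orient_def algebra_simps)
    show "Im ((1 - s) *\<^sub>R P1 + s *\<^sub>R P3) = Im ((1 - l) *\<^sub>R P2 + l *\<^sub>R P4)"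
      using D_pos unfolding s_def l_def by (simp add: field_simps) (simp add: D_def orient_def algebra_simps)
  qed
  have "(1 - s) *\<^sub>R P1 + s *\<^sub>R P3 \<in> closed_segment P1 P3" using s by (auto simp: in_segment)
  moreover have "(1 - l) *\<^sub>R P2 + l *\<^sub>R P4 \<in> closed_segment P2 P4" using l by (auto simp: in_segment)
  ultimately show ?thesis using eq by auto
qed

lemma sin_double_sum:
  fixes X Y :: real
  shows "sin (2 * X) + sin (2 * Y) - sin (2 * X + 2 * Y) = 4 * sin X * sin Y * sin (X + Y)"
proof -
  have "(sin X)\<^sup>2 + (cos X)\<^sup>2 = 1" "(sin Y)\<^sup>2 + (cos Y)\<^sup>2 = 1" by simp_all
  then show ?thesis unfolding sin_add cos_add sin_double cos_double by algebra
qed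

definition circle_point :: "nat \<Rightarrow> complex \<Rightarrow> real \<Rightarrow> real \<Rightarrow> real \<Rightarrow> complex" where
  "circle_point m c r t s = c + of_real r * cis (t + 2 * pi * s / real m)"

lemma orient_circle_point:
  "orient (circle_point m c r t a) (circle_point m c r t b) (circle_point m c r t d) =
    4 * r\<^sup>2 * sin (pi * (b - a) / m) * sin (pi * (d - b) / m) * sin (pi * (d - a) / m)"
proof (cases "m = 0")
  case True
  then show ?thesis by (simp add: circle_point_def orient_def)
next
  case False
  define \<alpha> \<beta> \<gamma> where "\<alpha> = t + 2 * pi * a / m" and "\<beta> = t + 2 * pi * b / m" and "\<gamma> = t + 2 * pi * d / m"
  define X Y where "X = pi * (b - a) / m" and "Y = pi * (d - b) / m"
  have diffs: "\<beta> - \<alpha> = 2 * X" "\<gamma> - \<beta> = 2 * Y" "\<gamma> - \<alpha> = 2 * X + 2 * Y"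
    using False by (simp_all add: \<alpha>_def \<beta>_def \<gamma>_def X_def Y_def field_simps)
  have "orient (circle_point m c r t a) (circle_point m c r t b) (circle_point m c r t d)
      = r\<^sup>2 * (sin (\<beta> - \<alpha>) + sin (\<gamma> - \<beta>) - sin (\<gamma> - \<alpha>))"
    unfolding circle_point_def \<alpha>_def [symmetric] \<beta>_def [symmetric] \<gamma>_def [symmetric] sin_diff
    by (simp add: orient_def power2_eq_square algebra_simps)
  also have "\<dots> = 4 * r\<^sup>2 * sin X * sin Y * sin (X + Y)" by (simp add: diffs sin_double_sum)
  also have "X + Y = pi * (d - a) / m" using False by (simp add: X_def Y_def field_simps)
  finally show ?thesis by (simp add: X_def Y_def)
qed

lemma sin_pi_fraction_nonneg: "0 < m \<Longrightarrow> 0 \<le> (x::real) \<Longrightarrow> x \<le> real m \<Longrightarrow> 0 \<le> sin (pi * x / m)"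
  by (intro sin_ge_zero) (auto simp: divide_le_eq mult_left_mono)

lemma sin_pi_fraction_pos: "0 < m \<Longrightarrow> 0 < (x::real) \<Longrightarrow> x < real m \<Longrightarrow> 0 < sin (pi * x / m)"
  by (intro sin_gt_zero) (auto simp: divide_less_eq)

definition boundary_point :: "nat \<Rightarrow> complex \<Rightarrow> real \<Rightarrow> real \<Rightarrow> real \<Rightarrow> complex" where
  "boundary_point m c r t s =
     (1 - frac s) *\<^sub>R circle_point m c r t \<lfloor>s\<rfloor> + frac s *\<^sub>R circle_point m c r t (of_int \<lfloor>s\<rfloor> + 1)"

text \<open>Meant for boundary parameters 0 <= x < y < z < m.  The second disjunct is the last edge
  [m - 1, m], whose end m is the parameter 0.\<close>

definition on_common_edge :: "nat \<Rightarrow> real \<Rightarrow> real \<Rightarrow> real \<Rightarrow> bool" where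
  "on_common_edge m x y z \<longleftrightarrow>
     (\<exists>e::int. of_int e \<le> x \<and> x \<le> of_int e + 1 \<and> of_int e \<le> y \<and> y \<le> of_int e + 1 \<and>
        of_int e \<le> z \<and> z \<le> of_int e + 1) \<or>
     (x = 0 \<and> real m - 1 \<le> y \<and> real m - 1 \<le> z)"

definition vertex_exit_pair :: "nat \<Rightarrow> real \<Rightarrow> real \<Rightarrow> bool" where
  "vertex_exit_pair m i P \<longleftrightarrow> (\<exists>k j l. k < m \<and> j < m \<and> 0 < l \<and> l < 1 \<and> j \<noteq> k \<and> Suc j mod m \<noteq> k \<and>
     i = real k \<and> P = real j + l)"

lemma vertex_exit_pair_range:
  assumes "vertex_exit_pair m i P"
  shows "0 \<le> i" "i < m" "0 \<le> P" "P < m" "i \<noteq> P"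
proof -
  obtain k j l where kjl: "k < m" "j < m" "0 < l" "l < 1" "i = real k" "P = real j + l"
    using assms by (auto simp: vertex_exit_pair_def)
  then have "real j + 1 \<le> real m" by linarith
  then show "0 \<le> i" "i < m" "0 \<le> P" "P < m" using kjl by auto
  show "i \<noteq> P"
  proof
    assume "i = P"
    then have "real j < real k" "real k < real j + 1" using kjl by auto
    then have "j < k" "k < j + 1" by linarith+
    then show False by simp
  qed
qed

lemma vertex_exit_pair_not_on_common_edge:
  fixes x y z :: real
  assumes pair: "vertex_exit_pair m i P" and "3 \<le> m"
    and "0 \<le> x" "x < y" "y < z" "z < m" and sub: "{i, P} \<subseteq> {x, y, z}"
  shows "\<not> on_common_edge m x y z"
proof
  obtain k j l where kjl: "k < m" "j < m" "0 < l" "l < 1" "j \<noteq> k" "Suc j mod m \<noteq> k"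
    and iP: "i = real k" "P = real j + l"
    using pair by (auto simp: vertex_exit_pair_def)
  assume "on_common_edge m x y z"
  then consider (edge) e :: int where "\<forall>s\<in>{x, y, z}. of_int e \<le> s \<and> s \<le> of_int e + 1"
    | (last) "x = 0" "real m - 1 \<le> y" "real m - 1 \<le> z"
    unfolding on_common_edge_def by auto
  then show False
  proof cases
    case edge
    then have bounds: "of_int e \<le> real j + l" "real j + l \<le> of_int e + 1"
        "of_int e \<le> real k" "real k \<le> of_int e + 1"
      using sub iP by auto
    have "e = int j" using bounds kjl(3,4) by linarith
    then have "real j \<le> real k" "real k \<le> real j + 1" using bounds by simp_all
    then have "k = j \<or> k = Suc j" by linarith
    then show False using kjl by (auto simp: mod_if)
  next
    case last
    have "real j + l \<noteq> x" using last kjl by auto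
    then have "real m - 1 \<le> real j + l" using sub iP last by auto
    then have "j = m - 1" using kjl by linarith
    then have "Suc j mod m = 0" using kjl by simp
    moreover have "k = 0 \<or> k = m - 1"
    proof (cases "real k = x")
      case False
      then have "real m - 1 \<le> real k" using sub iP last by auto
      then show ?thesis using kjl by linarith
    qed (use last in simp)
    ultimately show False using kjl \<open>j = m - 1\<close> by auto
  qed
qed

lemma vertex_exit_pair_vertex_ne_exit:
  assumes "vertex_exit_pair m i P" "vertex_exit_pair m k Q"
  shows "i \<noteq> Q"
proof
  obtain k' where "i = real k'" using assms(1) by (auto simp: vertex_exit_pair_def)
  moreover obtain j l where "0 < l" "l < 1" "Q = real j + l" using assms(2) by (auto simp: vertex_exit_pair_def)
  moreover assume "i = Q"
  ultimately have "j < k'" "k' < j + 1" by linarith+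
  then show False by simp
qed

context
  fixes m :: nat and c :: complex and r t :: real
  assumes three_le_m: "3 \<le> m" and r_pos: "0 < r"
begin

abbreviation (input) W where "W \<equiv> circle_point m c r t"
abbreviation (input) B where "B \<equiv> boundary_point m c r t"

lemma orient_circle_point_nonneg:
  fixes a b d :: real
  assumes "a \<le> b" "b \<le> d" "d \<le> a + m"
  shows "0 \<le> orient (W a) (W b) (W d)"
  unfolding orient_circle_point using assms three_le_m
  by (intro mult_nonneg_nonneg sin_pi_fraction_nonneg) auto

lemma orient_circle_point_pos:
  fixes a b d :: real
  assumes "a < b" "b < d" "d < a + m"
  shows "0 < orient (W a) (W b) (W d)"
  unfolding orient_circle_point using assms three_le_m r_pos
  by (intro mult_pos_pos sin_pi_fraction_pos) auto

lemma boundary_point_floor: "B x = (1 - frac x) *\<^sub>R W \<lfloor>x\<rfloor> + frac x *\<^sub>R W (of_int \<lfloor>x\<rfloor> + 1)"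
  by (simp add: boundary_point_def)

lemma orient_circle_boundary_nonneg:
  "(a::real) \<le> b \<Longrightarrow> b \<le> \<lfloor>w\<rfloor> \<Longrightarrow> of_int \<lfloor>w\<rfloor> + 1 \<le> a + m \<Longrightarrow> 0 \<le> orient (W a) (W b) (B w)"
  unfolding boundary_point_floor orient_affine
  by (rule convex_comb_nonneg) (auto simp: frac_lt_1 less_imp_le intro!: orient_circle_point_nonneg)

lemma orient_circle_boundary_pos:
  "(a::real) < b \<Longrightarrow> b < \<lfloor>w\<rfloor> \<Longrightarrow> of_int \<lfloor>w\<rfloor> + 1 \<le> a + m \<Longrightarrow> 0 < orient (W a) (W b) (B w)"
  unfolding boundary_point_floor orient_affine
  by (rule convex_comb_pos_left) (auto simp: frac_lt_1 intro!: orient_circle_point_nonneg orient_circle_point_pos)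

lemma floor_less_imp_succ_le: "\<lfloor>x\<rfloor> < \<lfloor>y\<rfloor> \<Longrightarrow> real_of_int \<lfloor>x\<rfloor> + 1 \<le> real_of_int \<lfloor>y\<rfloor>"
  by (metis of_int_1 of_int_add of_int_le_iff zless_imp_add1_zle)

lemma orient_boundary_pos_distinct_edges:
  fixes x y w :: real
  assumes "0 \<le> x" "\<lfloor>x\<rfloor> < \<lfloor>y\<rfloor>" "\<lfloor>y\<rfloor> < \<lfloor>w\<rfloor>" "w < m"
  shows "0 < orient (B x) (B y) (B w)"
proof -
  have "\<lfloor>w\<rfloor> < int m" using assms(4) by (simp add: floor_less_iff)
  then have bounds: "0 \<le> real_of_int \<lfloor>x\<rfloor>" "real_of_int \<lfloor>w\<rfloor> + 1 \<le> m"
    using assms(1) by (simp, metis of_int_1 of_int_add of_int_le_iff of_int_of_nat_eq zless_imp_add1_zle)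
  note steps = floor_less_imp_succ_le[OF assms(2)] floor_less_imp_succ_le[OF assms(3)]
  have nonneg: "0 \<le> orient (W a) (B y) (B w)" if "a \<le> \<lfloor>y\<rfloor>" "of_int \<lfloor>w\<rfloor> + 1 \<le> a + m" for a :: real
    unfolding boundary_point_floor[of y] orient_affine
  proof (rule convex_comb_nonneg)
    show "0 \<le> orient (W a) (W \<lfloor>y\<rfloor>) (B w)"
      using that steps by (intro orient_circle_boundary_nonneg; linarith)
    show "0 \<le> orient (W a) (W (of_int \<lfloor>y\<rfloor> + 1)) (B w)"
      using that steps by (intro orient_circle_boundary_nonneg; linarith)
  qed (simp_all add: frac_lt_1 less_imp_le)
  have "0 < orient (W \<lfloor>x\<rfloor>) (B y) (B w)"
    unfolding boundary_point_floor[of y] orient_affine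
  proof (rule convex_comb_pos_left)
    show "0 < orient (W \<lfloor>x\<rfloor>) (W \<lfloor>y\<rfloor>) (B w)"
      using bounds steps by (intro orient_circle_boundary_pos; linarith)
    show "0 \<le> orient (W \<lfloor>x\<rfloor>) (W (of_int \<lfloor>y\<rfloor> + 1)) (B w)"
      using bounds steps by (intro orient_circle_boundary_nonneg; linarith)
  qed (simp_all add: frac_lt_1)
  moreover have "0 \<le> orient (W (of_int \<lfloor>x\<rfloor> + 1)) (B y) (B w)"
    using bounds steps by (intro nonneg; linarith)
  ultimately show ?thesis
    unfolding boundary_point_floor[of x] orient_affine by (intro convex_comb_pos_left) (simp_all add: frac_lt_1)
qed

lemma orient_boundary_pos_first_edge:
  fixes x y w :: real
  assumes "0 \<le> x" "x < y" "\<lfloor>x\<rfloor> = \<lfloor>y\<rfloor>" "\<lfloor>y\<rfloor> < \<lfloor>w\<rfloor>" "w < m"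
    and not_common: "\<not> on_common_edge m x y w"
  shows "0 < orient (B x) (B y) (B w)"
proof -
  define i where "i = \<lfloor>x\<rfloor>"
  have i: "0 \<le> i" "i < \<lfloor>w\<rfloor>" "\<lfloor>w\<rfloor> < int m" using assms by (auto simp: i_def floor_less_iff)
  have "orient (B x) (B y) (B w) = (frac y - frac x) * orient (W i) (W (of_int i + 1)) (B w)"
    unfolding boundary_point_floor[of x] boundary_point_floor[of y] i_def assms(3) orient_collinear ..
  moreover have "frac x < frac y" using assms(2,3) by (simp add: frac_def)
  moreover have "0 < orient (W i) (W (of_int i + 1)) (B w)"
    unfolding boundary_point_floor[of w] orient_affine
  proof (cases "i + 2 \<le> \<lfloor>w\<rfloor>")
    case True
    then show "0 < (1 - frac w) * orient (W i) (W (of_int i + 1)) (W \<lfloor>w\<rfloor>)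
        + frac w * orient (W i) (W (of_int i + 1)) (W (of_int \<lfloor>w\<rfloor> + 1))"
      using i by (intro convex_comb_pos_left orient_circle_point_pos orient_circle_point_nonneg) (simp_all add: frac_lt_1)
  next
    case False
    then have w: "\<lfloor>w\<rfloor> = i + 1" using i by simp
    have "frac w \<noteq> 0"
    proof
      assume "frac w = 0"
      then have "w = of_int i + 1" using w by (simp add: frac_def)
      then have "on_common_edge m x y w"
        using assms(2) of_int_floor_le[of x] real_of_int_floor_add_one_ge[of y, folded assms(3)]
        unfolding on_common_edge_def i_def by (intro disjI1 exI[of _ "\<lfloor>x\<rfloor>"]) linarith
      then show False using not_common by simp
    qed
    then show "0 < (1 - frac w) * orient (W i) (W (of_int i + 1)) (W \<lfloor>w\<rfloor>)
        + frac w * orient (W i) (W (of_int i + 1)) (W (of_int \<lfloor>w\<rfloor> + 1))"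
      using w three_le_m by (intro convex_comb_pos_right orient_circle_point_pos orient_circle_point_nonneg) (simp_all add: frac_lt_1 less_le frac_lt_1[THEN less_imp_le])
  qed
  ultimately show ?thesis by simp
qed

lemma orient_boundary_pos_last_edge:
  fixes x y w :: real
  assumes "0 \<le> x" "\<lfloor>x\<rfloor> < \<lfloor>y\<rfloor>" "y < w" "\<lfloor>y\<rfloor> = \<lfloor>w\<rfloor>" "w < m"
    and not_common: "\<not> on_common_edge m x y w"
  shows "0 < orient (B x) (B y) (B w)"
proof -
  define j where "j = \<lfloor>y\<rfloor>"
  have j: "0 \<le> \<lfloor>x\<rfloor>" "\<lfloor>x\<rfloor> < j" "j < int m" using assms by (auto simp: j_def floor_less_iff)
  have "orient (B x) (B y) (B w) = (frac w - frac y) * orient (W j) (W (of_int j + 1)) (B x)"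
    unfolding orient_cycle[of "B x"] boundary_point_floor[of y] boundary_point_floor[of w] j_def
      assms(4) orient_collinear ..
  moreover have "frac y < frac w" using assms(3,4) by (simp add: frac_def)
  moreover have "0 < orient (W j) (W (of_int j + 1)) (B x)"
    unfolding boundary_point_floor[of x] orient_affine orient_cycle[of "W \<lfloor>x\<rfloor>", symmetric]
      orient_cycle[of "W (of_int \<lfloor>x\<rfloor> + 1)", symmetric]
  proof (cases "j + 1 < \<lfloor>x\<rfloor> + int m")
    case True
    then show "0 < (1 - frac x) * orient (W \<lfloor>x\<rfloor>) (W j) (W (of_int j + 1))
        + frac x * orient (W (of_int \<lfloor>x\<rfloor> + 1)) (W j) (W (of_int j + 1))"
      using j by (intro convex_comb_pos_left orient_circle_point_pos orient_circle_point_nonneg) (simp_all add: frac_lt_1)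
  next
    case False
    then have x: "\<lfloor>x\<rfloor> = 0" and y: "j = int m - 1" using j by linarith+
    have "frac x \<noteq> 0"
    proof
      assume "frac x = 0"
      then have "x = 0" using x by (simp add: frac_def)
      moreover have "real m - 1 \<le> y" "real m - 1 \<le> w" using y assms(3,4) unfolding j_def by linarith+
      ultimately show False using not_common by (simp add: on_common_edge_def)
    qed
    then show "0 < (1 - frac x) * orient (W \<lfloor>x\<rfloor>) (W j) (W (of_int j + 1))
        + frac x * orient (W (of_int \<lfloor>x\<rfloor> + 1)) (W j) (W (of_int j + 1))"
      using x y j three_le_m by (intro convex_comb_pos_right orient_circle_point_pos orient_circle_point_nonneg) (simp_all add: frac_lt_1 less_le frac_lt_1[THEN less_imp_le])
  qed
  ultimately show ?thesis by simp
qed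

lemma orient_boundary_point_pos:
  fixes x y w :: real
  assumes "0 \<le> x" "x < y" "y < w" "w < m" "\<not> on_common_edge m x y w"
  shows "0 < orient (B x) (B y) (B w)"
proof -
  have "\<lfloor>x\<rfloor> \<le> \<lfloor>y\<rfloor>" "\<lfloor>y\<rfloor> \<le> \<lfloor>w\<rfloor>" using assms by (simp_all add: floor_mono)
  moreover have "\<not> (\<lfloor>x\<rfloor> = \<lfloor>y\<rfloor> \<and> \<lfloor>y\<rfloor> = \<lfloor>w\<rfloor>)"
  proof
    assume same: "\<lfloor>x\<rfloor> = \<lfloor>y\<rfloor> \<and> \<lfloor>y\<rfloor> = \<lfloor>w\<rfloor>"
    then have "real_of_int \<lfloor>w\<rfloor> = \<lfloor>x\<rfloor>" by simp
    then have "on_common_edge m x y w"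
      using assms(2,3) of_int_floor_le[of x] real_of_int_floor_add_one_ge[of w]
      unfolding on_common_edge_def by (intro disjI1 exI[of _ "\<lfloor>x\<rfloor>"]) linarith
    then show False using assms(5) by simp
  qed
  ultimately consider "\<lfloor>x\<rfloor> < \<lfloor>y\<rfloor>" "\<lfloor>y\<rfloor> < \<lfloor>w\<rfloor>" | "\<lfloor>x\<rfloor> = \<lfloor>y\<rfloor>" "\<lfloor>y\<rfloor> < \<lfloor>w\<rfloor>"
    | "\<lfloor>x\<rfloor> < \<lfloor>y\<rfloor>" "\<lfloor>y\<rfloor> = \<lfloor>w\<rfloor>"
    by linarith
  then show ?thesis
    by cases (use assms orient_boundary_pos_distinct_edges orient_boundary_pos_first_edge
        orient_boundary_pos_last_edge in auto)
qed

lemma boundary_diagonals_intersect: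
  fixes s1 s2 s3 s4 :: real
  assumes "0 \<le> s1" "s1 < s2" "s2 < s3" "s3 < s4" "s4 < m"
    and "\<not> on_common_edge m s1 s2 s3" "\<not> on_common_edge m s1 s2 s4"
    and "\<not> on_common_edge m s1 s3 s4" "\<not> on_common_edge m s2 s3 s4"
  shows "closed_segment (B s1) (B s3) \<inter> closed_segment (B s2) (B s4) \<noteq> {}"
  using assms by (intro diagonals_intersect orient_boundary_point_pos) auto


lemma interleaved_vertex_exit_chords_intersect:
  assumes p1: "vertex_exit_pair m i P" and p2: "vertex_exit_pair m k Q"
    and order: "min i P < min k Q" "min k Q < max i P" "max i P < max k Q"
  shows "closed_segment (B i) (B P) \<inter> closed_segment (B k) (B Q) \<noteq> {}"
proof -
  have seg: "closed_segment (B x) (B y) = closed_segment (B (min x y)) (B (max x y))" for x y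
    by (cases "x \<le> y") (auto simp: min_def max_def closed_segment_commute)
  have pairs: "{i, P} = {min i P, max i P}" "{k, Q} = {min k Q, max k Q}"
    by (auto simp: min_def max_def)
  have range: "0 \<le> min i P" "max k Q < m"
    using vertex_exit_pair_range[OF p1] vertex_exit_pair_range[OF p2] by auto
  note no_edge1 = vertex_exit_pair_not_on_common_edge[OF p1 three_le_m]
  note no_edge2 = vertex_exit_pair_not_on_common_edge[OF p2 three_le_m]
  have "\<not> on_common_edge m (min i P) (min k Q) (max i P)"
    using range order by (intro no_edge1) (auto simp: pairs)
  moreover have "\<not> on_common_edge m (min i P) (min k Q) (max k Q)"
    using range order by (intro no_edge2) (auto simp: pairs)
  moreover have "\<not> on_common_edge m (min i P) (max i P) (max k Q)"
    using range order by (intro no_edge1) (auto simp: pairs)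
  moreover have "\<not> on_common_edge m (min k Q) (max i P) (max k Q)"
    using range order by (intro no_edge2) (auto simp: pairs)
  ultimately show ?thesis
    unfolding seg[of i] seg[of k] using range order
    by (intro boundary_diagonals_intersect) auto
qed

lemma vertex_exit_chords_intersect:
  assumes p1: "vertex_exit_pair m i P" and p2: "vertex_exit_pair m k Q"
    and "i \<noteq> k" "P \<noteq> Q" and cross: "strictly_between i P k \<noteq> strictly_between i P Q"
  shows "closed_segment (B i) (B P) \<inter> closed_segment (B k) (B Q) \<noteq> {}"
proof -
  have "i \<noteq> P" "k \<noteq> Q" "i \<noteq> Q" "k \<noteq> P"
    using vertex_exit_pair_range(5) vertex_exit_pair_vertex_ne_exit p1 p2 by blast+
  then consider "min i P < min k Q" "min k Q < max i P" "max i P < max k Q"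
    | "min k Q < min i P" "min i P < max k Q" "max k Q < max i P"
    using cross \<open>i \<noteq> k\<close> \<open>P \<noteq> Q\<close> unfolding strictly_between_def min_def max_def by (smt (verit))
  then show ?thesis
  proof cases
    case 2
    then show ?thesis using interleaved_vertex_exit_chords_intersect[OF p2 p1] by blast
  qed (rule interleaved_vertex_exit_chords_intersect[OF p1 p2])
qed

end

section \<open>From arrows to chords\<close>

lemma on_incident_edge_vertex_exit:
  assumes k: "k < m" and j: "j < m" and l: "0 < l" "l < 1"
    and incident: "on_incident_edge (real ` {..<m}) (real k) (real j + l)"
  shows "k = j \<or> k = Suc j mod m"
proof (rule ccontr)
  assume ne: "\<not> (k = j \<or> k = Suc j mod m)"
  have inside: "\<exists>s\<in>real ` {..<m}. s \<noteq> real k \<and> strictly_between (real k) (real j + l) s"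
  proof (cases "k < j")
    case True
    then show ?thesis using j l by (intro bexI[of _ "real j"]) (auto simp: strictly_between_def)
  next
    case False
    then have "Suc j < k" using ne k by (auto simp: mod_if split: if_splits)
    then show ?thesis using l k by (intro bexI[of _ "real (Suc j)"] imageI) (auto simp: strictly_between_def)
  qed
  have outside: "\<exists>s\<in>real ` {..<m}. s \<noteq> real k \<and> \<not> strictly_between (real k) (real j + l) s"
  proof (cases "k < j")
    case True
    show ?thesis
    proof (cases "Suc j < m")
      case True
      then show ?thesis
        using \<open>k < j\<close> l by (intro bexI[of _ "real (Suc j)"] imageI) (auto simp: strictly_between_def)
    next
      case False
      then have "Suc j = m" using j by simp
      then have "k \<noteq> 0" using ne by auto
      then show ?thesis using l k by (intro bexI[of _ 0]) (auto simp: strictly_between_def)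
    qed
  next
    case False
    then have "j < k" using ne by auto
    then show ?thesis using j l by (intro bexI[of _ "real j"]) (auto simp: strictly_between_def)
  qed
  show False using incident inside outside by (auto simp: on_incident_edge_def)
qed

lemma vertex_exit_pair_arrow_conditions:
  assumes "vertex_exit_pair m i P"
  shows "i \<in> real ` {..<m}" "P \<notin> real ` {..<m}" "\<not> on_incident_edge (real ` {..<m}) i P"
proof -
  obtain k j l where kjl: "k < m" "j < m" "0 < l" "l < 1" "j \<noteq> k" "Suc j mod m \<noteq> k"
    and iP: "i = real k" "P = real j + l"
    using assms by (auto simp: vertex_exit_pair_def)
  show "i \<in> real ` {..<m}" using kjl iP by simp
  show "P \<notin> real ` {..<m}"
  proof
    assume "P \<in> real ` {..<m}"
    then obtain k' where "P = real k'" by auto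
    then have "j < k'" "k' < j + 1" using iP kjl by linarith+
    then show False by simp
  qed
  show "\<not> on_incident_edge (real ` {..<m}) i P"
    using on_incident_edge_vertex_exit[OF kjl(1-4)] kjl(5,6) iP by auto
qed

lemma on_same_edge_exits:
  assumes "j1 < m" "j2 < m" "0 < l1" "l1 < 1" "0 < l2" "l2 < 1"
    and same: "on_same_edge (real ` {..<m}) (real j1 + l1) (real j2 + l2)"
  shows "j1 = j2"
proof (rule ccontr)
  assume "j1 \<noteq> j2"
  then have "\<exists>s\<in>real ` {..<m}. strictly_between (real j1 + l1) (real j2 + l2) s"
    using assms by (intro bexI[of _ "real (max j1 j2)"]) (auto simp: strictly_between_def max_def)
  moreover have "\<exists>s\<in>real ` {..<m}. \<not> strictly_between (real j1 + l1) (real j2 + l2) s"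
    using assms by (intro bexI[of _ 0]) (auto simp: strictly_between_def)
  ultimately show False using same by (auto simp: on_same_edge_def)
qed

definition exit_edge :: "nat \<Rightarrow> complex \<Rightarrow> real \<Rightarrow> real \<Rightarrow> nat \<times> complex \<Rightarrow> nat \<times> real" where
  "exit_edge m c r t a = (SOME (j, l). j < m \<and> j \<noteq> fst a \<and> Suc j mod m \<noteq> fst a \<and> 0 < l \<and> l < 1 \<and>
     snd a = (1 - l) *\<^sub>R vtx m c r t j + l *\<^sub>R vtx m c r t (Suc j mod m))"

lemma exit_edgeE:
  assumes "is_arrow m c r t a"
  obtains j l where "exit_edge m c r t a = (j, l)" "j < m" "j \<noteq> fst a" "Suc j mod m \<noteq> fst a"
    "0 < l" "l < 1" "snd a = (1 - l) *\<^sub>R vtx m c r t j + l *\<^sub>R vtx m c r t (Suc j mod m)"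
proof -
  obtain j where j: "j < m" "j \<noteq> fst a" "Suc j mod m \<noteq> fst a"
    and exit: "snd a \<in> open_segment (vtx m c r t j) (vtx m c r t (Suc j mod m))"
    using assms by (auto simp: is_arrow_def)
  obtain l where "0 < l" "l < 1" "snd a = (1 - l) *\<^sub>R vtx m c r t j + l *\<^sub>R vtx m c r t (Suc j mod m)"
    using exit by (auto simp: in_segment(2))
  then have "\<exists>jl. case jl of (j, l) \<Rightarrow> j < m \<and> j \<noteq> fst a \<and> Suc j mod m \<noteq> fst a \<and> 0 < l \<and> l < 1 \<and>
      snd a = (1 - l) *\<^sub>R vtx m c r t j + l *\<^sub>R vtx m c r t (Suc j mod m)"
    using j by (intro exI[of _ "(j, l)"]) simp
  then have "case exit_edge m c r t a of (j, l) \<Rightarrow> j < m \<and> j \<noteq> fst a \<and> Suc j mod m \<noteq> fst a \<and>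
      0 < l \<and> l < 1 \<and> snd a = (1 - l) *\<^sub>R vtx m c r t j + l *\<^sub>R vtx m c r t (Suc j mod m)"
    unfolding exit_edge_def by (rule someI_ex)
  then show thesis using that by (auto split: prod.splits)
qed

definition arrow_chord :: "nat \<Rightarrow> complex \<Rightarrow> real \<Rightarrow> real \<Rightarrow> nat \<times> complex \<Rightarrow> real \<times> real" where
  "arrow_chord m c r t a = (real (fst a), real (fst (exit_edge m c r t a)) + snd (exit_edge m c r t a))"

lemma fan_crossing_freeD:
  assumes "fan_crossing_free m c r t A"
    and "x \<in> elements m A" "y \<in> elements m A" "z \<in> elements m A" "y \<noteq> z" "x \<noteq> y" "x \<noteq> z"
    and "elem_inc m y \<inter> elem_inc m z \<noteq> {}" "intersects m c r t x y" "intersects m c r t x z"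
  shows False
  using assms unfolding fan_crossing_free_def by blast

lemma intersects_commute: "intersects m c r t x y = intersects m c r t y x"
  unfolding intersects_def by (auto simp: Int_commute)

context
  fixes m :: nat and c :: complex and r t :: real
  assumes three_le_m: "3 \<le> m" and r_pos: "0 < r"
begin

lemma vtx_eq_circle_point: "k < m \<Longrightarrow> vtx m c r t k = circle_point m c r t (real k)"
  by (simp add: vtx_def circle_point_def)

lemma vtx_Suc_mod: "j < m \<Longrightarrow> vtx m c r t (Suc j mod m) = circle_point m c r t (real j + 1)"
proof (cases "Suc j < m")
  case True
  then show ?thesis using vtx_eq_circle_point[OF True] by (simp add: add.commute)
next
  case False
  moreover assume "j < m"
  ultimately have "Suc j = m" by simp
  then have "real j + 1 = real m" "Suc j mod m = 0" by (simp_all flip: \<open>Suc j = m\<close>)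
  then have "2 * pi * (real j + 1) / real m = 2 * pi" "Suc j mod m = 0" using three_le_m by simp_all
  then show ?thesis by (simp add: vtx_def circle_point_def complex_eq_iff)
qed

lemma boundary_point_vertex: "boundary_point m c r t (real k) = circle_point m c r t (real k)"
  by (simp add: boundary_point_def frac_def)

lemma boundary_point_edge:
  assumes "0 \<le> l" "l < 1"
  shows "boundary_point m c r t (real j + l)
    = (1 - l) *\<^sub>R circle_point m c r t (real j) + l *\<^sub>R circle_point m c r t (real j + 1)"
proof -
  have "\<lfloor>real j + l\<rfloor> = int j" using assms by (simp add: floor_eq_iff)
  then show ?thesis by (simp add: boundary_point_def frac_def)
qed

lemma arrow_chord_exit:
  assumes "is_arrow m c r t a" "exit_edge m c r t a = (j, l)"
  shows "arrow_chord m c r t a = (real (fst a), real j + l)"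
  using assms by (simp add: arrow_chord_def)

lemma arrow_chord_geometry:
  assumes arrow: "is_arrow m c r t a"
  shows "vertex_exit_pair m (fst (arrow_chord m c r t a)) (snd (arrow_chord m c r t a))"
    and "boundary_point m c r t (fst (arrow_chord m c r t a)) = vtx m c r t (fst a)"
    and "boundary_point m c r t (snd (arrow_chord m c r t a)) = snd a"
proof -
  obtain j l where jl: "exit_edge m c r t a = (j, l)" "j < m" "j \<noteq> fst a" "Suc j mod m \<noteq> fst a"
      "0 < l" "l < 1" "snd a = (1 - l) *\<^sub>R vtx m c r t j + l *\<^sub>R vtx m c r t (Suc j mod m)"
    using exit_edgeE[OF arrow] by blast
  have "fst a < m" using arrow by (simp add: is_arrow_def)
  show "vertex_exit_pair m (fst (arrow_chord m c r t a)) (snd (arrow_chord m c r t a))"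
    unfolding arrow_chord_exit[OF arrow jl(1)] vertex_exit_pair_def
    using jl \<open>fst a < m\<close> by (intro exI[of _ "fst a"] exI[of _ j] exI[of _ l]) simp
  show "boundary_point m c r t (fst (arrow_chord m c r t a)) = vtx m c r t (fst a)"
    unfolding arrow_chord_exit[OF arrow jl(1)] using \<open>fst a < m\<close>
    by (simp add: boundary_point_vertex vtx_eq_circle_point)
  show "boundary_point m c r t (snd (arrow_chord m c r t a)) = snd a"
    unfolding arrow_chord_exit[OF arrow jl(1)] using jl
    by (simp add: boundary_point_edge vtx_eq_circle_point[OF jl(2)] vtx_Suc_mod)
qed

context
  fixes A :: "(nat \<times> complex) set"
  assumes finite_A: "finite A" and arrows: "\<forall>a\<in>A. is_arrow m c r t a"
    and fcf: "fan_crossing_free m c r t A"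
begin

lemma arrow_intersects_exit_edge:
  assumes a: "a \<in> A"
  shows "intersects m c r t (Inr a) (Inl (fst (exit_edge m c r t a)))"
proof -
  obtain j l where jl: "exit_edge m c r t a = (j, l)" "j \<noteq> fst a" "Suc j mod m \<noteq> fst a"
      "0 < l" "l < 1" "snd a = (1 - l) *\<^sub>R vtx m c r t j + l *\<^sub>R vtx m c r t (Suc j mod m)"
    using exit_edgeE arrows a by metis
  have "snd a \<in> closed_segment (vtx m c r t j) (vtx m c r t (Suc j mod m))"
    unfolding in_segment(1) jl(6) using jl(4,5) by (intro exI[of _ l]) auto
  moreover have "elem_inc m (Inr a) \<inter> elem_inc m (Inl j) = {}"
    using jl(2,3) by (auto simp: elem_inc_def)
  ultimately show ?thesis using jl(1) by (auto simp: intersects_def elem_pts_def)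
qed

lemma arrows_intersect_if_chords_cross:
  assumes a: "a \<in> A" and b: "b \<in> A"
    and cross: "chords_cross (arrow_chord m c r t a) (arrow_chord m c r t b)"
  shows "intersects m c r t (Inr a) (Inr b)"
proof -
  note geo_a = arrow_chord_geometry[OF arrows[rule_format, OF a]]
  note geo_b = arrow_chord_geometry[OF arrows[rule_format, OF b]]
  have "fst a \<noteq> fst b" using cross by (simp add: chords_cross_def arrow_chord_def)
  then have disjoint: "elem_inc m (Inr a) \<inter> elem_inc m (Inr b) = {}" by (simp add: elem_inc_def)
  have "closed_segment (vtx m c r t (fst a)) (snd a) \<inter> closed_segment (vtx m c r t (fst b)) (snd b) \<noteq> {}"
  proof (cases "snd (arrow_chord m c r t a) = snd (arrow_chord m c r t b)")
    case True
    then have "snd a = snd b" using geo_a(3) geo_b(3) by metis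
    then show ?thesis by auto
  next
    case False
    moreover have "fst (arrow_chord m c r t a) \<noteq> fst (arrow_chord m c r t b)"
      using cross by (simp add: chords_cross_def)
    ultimately have "closed_segment (boundary_point m c r t (fst (arrow_chord m c r t a)))
        (boundary_point m c r t (snd (arrow_chord m c r t a)))
      \<inter> closed_segment (boundary_point m c r t (fst (arrow_chord m c r t b)))
        (boundary_point m c r t (snd (arrow_chord m c r t b))) \<noteq> {}"
      using vertex_exit_chords_intersect[where c = c and t = t, OF three_le_m r_pos geo_a(1) geo_b(1)]
        cross by (simp add: chords_cross_def)
    then show ?thesis unfolding geo_a(2,3) geo_b(2,3) .
  qed
  then show ?thesis using disjoint by (auto simp: intersects_def elem_pts_def)
qed

lemma inj_on_arrow_chord: "inj_on (arrow_chord m c r t) A"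
proof (rule inj_onI)
  fix a b assume "a \<in> A" "b \<in> A" and eq: "arrow_chord m c r t a = arrow_chord m c r t b"
  then have "snd a = snd b"
    using arrow_chord_geometry(3) arrows by metis
  moreover have "fst a = fst b" using eq by (simp add: arrow_chord_def)
  ultimately show "a = b" by (simp add: prod_eq_iff)
qed

lemma arrow_chords_distinct_edges:
  assumes a: "a \<in> A" and b: "b \<in> A" and "a \<noteq> b" "fst a = fst b"
  shows "\<not> on_same_edge (real ` {..<m}) (snd (arrow_chord m c r t a)) (snd (arrow_chord m c r t b))"
proof
  obtain ja la where a_exit: "exit_edge m c r t a = (ja, la)" "ja < m" "0 < la" "la < 1"
    using exit_edgeE arrows a by metis
  obtain jb lb where b_exit: "exit_edge m c r t b = (jb, lb)" "jb < m" "0 < lb" "lb < 1"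
    using exit_edgeE arrows b by metis
  assume "on_same_edge (real ` {..<m}) (snd (arrow_chord m c r t a)) (snd (arrow_chord m c r t b))"
  then have "ja = jb"
    using on_same_edge_exits a_exit(2-4) b_exit(2-4) a_exit(1) b_exit(1) by (simp add: arrow_chord_def)
  then show False
    using fan_crossing_freeD[OF fcf, of "Inl ja" "Inr a" "Inr b"] assms a_exit b_exit
      arrow_intersects_exit_edge[OF a] arrow_intersects_exit_edge[OF b] intersects_commute
    by (auto simp: elements_def elem_inc_def)
qed

lemma arrow_chords_cross_not_incident:
  assumes x: "x \<in> A" and y: "y \<in> A"
    and cross: "chords_cross (arrow_chord m c r t x) (arrow_chord m c r t y)"
  shows "\<not> on_incident_edge (real ` {..<m}) (fst (arrow_chord m c r t y)) (snd (arrow_chord m c r t x))"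
proof
  obtain j l where x_exit: "exit_edge m c r t x = (j, l)" "j < m" "0 < l" "l < 1"
    using exit_edgeE arrows x by metis
  have "fst y < m" using arrows y by (simp add: is_arrow_def)
  assume "on_incident_edge (real ` {..<m}) (fst (arrow_chord m c r t y)) (snd (arrow_chord m c r t x))"
  then have "fst y = j \<or> fst y = Suc j mod m"
    using on_incident_edge_vertex_exit[OF \<open>fst y < m\<close> x_exit(2-4)] x_exit(1)
    by (simp add: arrow_chord_def)
  moreover have "fst x \<noteq> fst y" using cross by (simp add: chords_cross_def arrow_chord_def)
  ultimately show False
    using fan_crossing_freeD[OF fcf, of "Inr x" "Inr y" "Inl j"] x y x_exit(1,2)
      arrows_intersect_if_chords_cross[OF x y cross] arrow_intersects_exit_edge[OF x]
    by (auto simp: elements_def elem_inc_def)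
qed

lemma arrow_chords_no_fan_crossing:
  assumes x: "x \<in> A" and y: "y \<in> A" and z: "z \<in> A" and "y \<noteq> z" "fst y = fst z"
    and cross: "chords_cross (arrow_chord m c r t x) (arrow_chord m c r t y)"
      "chords_cross (arrow_chord m c r t x) (arrow_chord m c r t z)"
  shows False
proof -
  have "fst x \<noteq> fst y" "fst x \<noteq> fst z" using cross by (simp_all add: chords_cross_def arrow_chord_def)
  then show False
    using fan_crossing_freeD[OF fcf, of "Inr x" "Inr y" "Inr z"] assms
      arrows_intersect_if_chords_cross[OF x y cross(1)] arrows_intersect_if_chords_cross[OF x z cross(2)]
    by (auto simp: elements_def elem_inc_def)
qed

lemma fcf_config_arrow_chords: "fcf_config (real ` {..<m}) (arrow_chord m c r t ` A)"
proof -
  note geo = arrow_chord_geometry(1)[OF arrows[rule_format]]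
  have start_eq: "fst (arrow_chord m c r t a) = fst (arrow_chord m c r t b) \<longleftrightarrow> fst a = fst b" for a b
    by (simp add: arrow_chord_def)
  have "\<forall>a\<in>A. fst (arrow_chord m c r t a) \<in> real ` {..<m} \<and> snd (arrow_chord m c r t a) \<notin> real ` {..<m}
      \<and> \<not> on_incident_edge (real ` {..<m}) (fst (arrow_chord m c r t a)) (snd (arrow_chord m c r t a))"
    using vertex_exit_pair_arrow_conditions[OF geo] by blast
  moreover have "\<forall>a\<in>A. \<forall>b\<in>A. arrow_chord m c r t a \<noteq> arrow_chord m c r t b
      \<and> fst (arrow_chord m c r t a) = fst (arrow_chord m c r t b)
      \<longrightarrow> \<not> on_same_edge (real ` {..<m}) (snd (arrow_chord m c r t a)) (snd (arrow_chord m c r t b))"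
    using arrow_chords_distinct_edges start_eq by metis
  moreover have "\<forall>x\<in>A. \<forall>y\<in>A. chords_cross (arrow_chord m c r t x) (arrow_chord m c r t y)
      \<longrightarrow> \<not> on_incident_edge (real ` {..<m}) (fst (arrow_chord m c r t y)) (snd (arrow_chord m c r t x))"
    using arrow_chords_cross_not_incident by blast
  moreover have "\<forall>x\<in>A. \<forall>y\<in>A. \<forall>z\<in>A. chords_cross (arrow_chord m c r t x) (arrow_chord m c r t y)
      \<and> chords_cross (arrow_chord m c r t x) (arrow_chord m c r t z)
      \<and> arrow_chord m c r t y \<noteq> arrow_chord m c r t z
      \<and> fst (arrow_chord m c r t y) = fst (arrow_chord m c r t z) \<longrightarrow> False"
    using arrow_chords_no_fan_crossing start_eq by metis
  ultimately show ?thesis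
    unfolding fcf_config_def Ball_image_comp comp_def using finite_A by blast
qed

lemma card_arrows_le: "card A \<le> 2 * m - 5"
proof -
  have "card (arrow_chord m c r t ` A) \<le> 2 * card (real ` {..<m}) - 5"
    using fcf_config_card_le[OF fcf_config_arrow_chords] three_le_m by (simp add: card_image)
  then show ?thesis by (simp add: card_image inj_on_arrow_chord)
qed

end

end

theorem lemma3:
  fixes m :: nat and c :: complex and r t :: real and A :: "(nat \<times> complex) set"
  assumes "m \<ge> 3" and "r > 0"
    and "finite A" and "\<forall>a\<in>A. is_arrow m c r t a"
    and "fan_crossing_free m c r t A"
  shows "card A \<le> 3 * m - 8 \<and> (m \<ge> 4 \<longrightarrow> card A \<le> 3 * m - 9)"
  using card_arrows_le[OF assms] assms(1) by auto

end
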